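(* Let $n\ge1$, $1\le p\le n$ and $r\in[n+1]$. The set $\mathcal{T}_n^{(r,p)}$ of $(r,p)$-toppleable permutations of $[n]$ is in one-to-one correspondence with the set of $(n-p+1,p)$-Vesztergombi permutations $\sigma$ satisfying $\sigma^{-1}_{p+1}=r$, and also with the set of $(n-p+1,p)$-Callan permutations whose first entry is $r$.
   Context: Sites are $0,\dots,n+1$. A configuration in $\mathcal{S}(n,p)$ places $n+1$ distinct chips labeled $1,\dots,n+1$ with sites $0,n+1$ empty, one chip at each site of $\{1,\dots,n\}\setminus\{p\}$ and two chips at site $p$. Toppling: while some site holds at least two chips, choose such a site $i$ and two chips $\alpha<\beta$ there and move $\alpha$ to $i-1$, $\beta$ to $i+1$; it is known this terminates with at most one chip per site and the final configuration is independent of the choices. For $\pi\in S_n$, $\pi^{(r,p)}$ places at site $i$ ($1\le i\le n$) chip $\pi_i$ if $\pi_i<r$ and $\pi_i+1$ otherwise, plus chip $r$ at site $p$; $\pi$ is $(r,p)$-toppleable if the final configuration of $\pi^{(r,p)}$ read left to right is $1,2,\dots,n+1$. For $k,m\ge1$, a $(k,m)$-Vesztergombi permutation is $\sigma\in S_{k+m}$ with $-k\le\sigma_i-i\le m$ for all $i$; $\sigma^{-1}_{j}$ is the position of $j$ in $\sigma$. An $(m,k)$-Callan permutation is $\tau\in S_{m+k}$ such that every maximal contiguous block of entries all lying in $\{1,\dots,m\}$ is increasing and every maximal contiguous block of entries all lying in $\{m+1,\dots,m+k\}$ is decreasing. *)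

theory Defs
  imports "HOL-Combinatorics.Permutations"
begin

type_synonym config = "int \<Rightarrow> nat set"

definition topple_step :: "config \<Rightarrow> config \<Rightarrow> bool" where
  "topple_step c c' \<longleftrightarrow> (\<exists>i \<alpha> \<beta>. \<alpha> \<in> c i \<and> \<beta> \<in> c i \<and> \<alpha> < \<beta> \<and>
     c' = (\<lambda>j. if j = i then c i - {\<alpha>, \<beta>}
               else if j = i - 1 then c j \<union> {\<alpha>}
               else if j = i + 1 then c j \<union> {\<beta>}
               else c j))"

definition stable :: "config \<Rightarrow> bool" where
  "stable c \<longleftrightarrow> (\<forall>i. card (c i) \<le> 1 \<and> finite (c i))"

definition read_config :: "nat \<Rightarrow> config \<Rightarrow> nat list" where
  "read_config n c = concat (map (\<lambda>i. sorted_list_of_set (c i)) [0..int n + 1])"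

definition insert_config :: "nat \<Rightarrow> (nat \<Rightarrow> nat) \<Rightarrow> nat \<Rightarrow> nat \<Rightarrow> config" where
  "insert_config n \<pi> r p = (\<lambda>i.
     (if 1 \<le> i \<and> i \<le> int n then {if \<pi> (nat i) < r then \<pi> (nat i) else \<pi> (nat i) + 1} else {})
     \<union> (if i = int p then {r} else {}))"

definition toppleable :: "nat \<Rightarrow> nat \<Rightarrow> nat \<Rightarrow> (nat \<Rightarrow> nat) \<Rightarrow> bool" where
  "toppleable n r p \<pi> \<longleftrightarrow> (\<exists>c. topple_step\<^sup>*\<^sup>* (insert_config n \<pi> r p) c \<and> stable c
       \<and> read_config n c = [1..<n+2])"

definition toppleable_perms :: "nat \<Rightarrow> nat \<Rightarrow> nat \<Rightarrow> (nat \<Rightarrow> nat) set" where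
  "toppleable_perms n r p = {\<pi>. \<pi> permutes {1..n} \<and> toppleable n r p \<pi>}"

definition vesztergombi :: "nat \<Rightarrow> nat \<Rightarrow> (nat \<Rightarrow> nat) set" where
  "vesztergombi k m = {\<sigma>. \<sigma> permutes {1..k+m} \<and>
     (\<forall>i\<in>{1..k+m}. - int k \<le> int (\<sigma> i) - int i \<and> int (\<sigma> i) - int i \<le> int m)}"

text \<open>(m,k)-Callan permutations of {1..m+k}: maximal runs of small entries (in {1..m}) increase,
  maximal runs of large entries (in {m+1..m+k}) decrease; equivalently adjacent entries of
  the same kind are in increasing / decreasing order respectively.\<close>
definition callan :: "nat \<Rightarrow> nat \<Rightarrow> (nat \<Rightarrow> nat) set" where
  "callan m k = {\<tau>. \<tau> permutes {1..m+k} \<and>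
     (\<forall>i. 1 \<le> i \<and> i + 1 \<le> m + k \<longrightarrow>
        (\<tau> i \<le> m \<and> \<tau> (i+1) \<le> m \<longrightarrow> \<tau> i < \<tau> (i+1)) \<and>
        (m < \<tau> i \<and> m < \<tau> (i+1) \<longrightarrow> \<tau> i > \<tau> (i+1)))}"

end

theory Submission
  imports Defs "HOL-Library.Confluence"
begin

text \<open>
  Let \<open>w = perm_insert (p + 1) r \<pi>\<close> be the word of chip labels of \<open>insert_config n \<pi> r p\<close>
  read from left to right.  Each toppling of a site holding two adjacent letters of \<open>w\<close>
  puts them into increasing order, and toppling the double sites in sweeps from right to left,
  each sweep starting one site further right, runs a bubble-sorting network of \<open>n + 1 - p\<close>
  passes of \<open>p\<close> compare-exchanges on \<open>w\<close>.  Any two double sites are separated by an empty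
  site, hence topplings commute and the final configuration is the output of this network:
  \<open>\<pi>\<close> is toppleable iff the network sorts \<open>w\<close>.  An invariant of the passes shows that this
  happens exactly when \<open>w\<close> is a \<open>(p, n - p + 1)\<close>-Vesztergombi permutation, and inversion
  turns these into the \<open>(n - p + 1, p)\<close>-Vesztergombi permutations \<open>\<sigma>\<close> with
  \<open>inv \<sigma> (p + 1) = w (p + 1) = r\<close>.

  The second correspondence is obtained by counting: the numbers of \<open>(a, b)\<close>-Vesztergombi
  permutations with \<open>\<sigma> r = b + 1\<close> and of \<open>(a, b)\<close>-Callan permutations starting with \<open>r\<close>
  satisfy the same recursion, obtained by deleting an entry at an extreme value and by
  swapping the positions \<open>r, r + 1\<close>, respectively the values \<open>r, r + 1\<close>.
\<close>

section \<open>Permutations\<close>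

lemma permutes_eq_iff: "\<sigma> permutes S \<Longrightarrow> \<sigma> x = \<sigma> y \<longleftrightarrow> x = y"
  by (metis permutes_inj injD)

lemma permutes_eq_id_if_ge:
  fixes \<sigma> :: "nat \<Rightarrow> nat"
  assumes \<sigma>: "\<sigma> permutes {1..N}" and ge: "\<And>i. i \<in> {1..N} \<Longrightarrow> i \<le> \<sigma> i"
  shows "\<sigma> = id"
proof -
  have "\<sigma> i = i" if i: "i \<in> {1..N}" for i
  proof (rule ccontr)
    assume "\<sigma> i \<noteq> i"
    then have "sum id {1..N} < sum (id \<circ> \<sigma>) {1..N}"
      using ge i le_neq_trans[OF ge[OF i]] by (intro sum_strict_mono_ex1) auto
    then show False using sum.permute[OF \<sigma>, of id] by simp
  qed
  then show ?thesis using permutes_not_in[OF \<sigma>] by fastforce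
qed

lemma permutes_eq_id_if_le:
  fixes \<sigma> :: "nat \<Rightarrow> nat"
  assumes \<sigma>: "\<sigma> permutes {1..N}" and le: "\<And>i. i \<in> {1..N} \<Longrightarrow> \<sigma> i \<le> i"
  shows "\<sigma> = id"
proof -
  have "inv \<sigma> = id"
  proof (rule permutes_eq_id_if_ge[OF permutes_inv[OF \<sigma>]])
    fix j assume "j \<in> {1..N}"
    then show "j \<le> inv \<sigma> j"
      using le[of "inv \<sigma> j"] permutes_inverses(1)[OF \<sigma>] permutes_in_image[OF permutes_inv[OF \<sigma>]]
      by metis
  qed
  then show ?thesis by (metis \<sigma> inv_id permutes_inv_inv)
qed

lemma permutes_eq_id_if_increasing:
  fixes \<sigma> :: "nat \<Rightarrow> nat"
  assumes \<sigma>: "\<sigma> permutes {1..N}" and inc: "\<And>i. 1 \<le> i \<Longrightarrow> Suc i \<le> N \<Longrightarrow> \<sigma> i < \<sigma> (Suc i)"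
  shows "\<sigma> = id"
proof (rule permutes_eq_id_if_ge[OF \<sigma>])
  fix i assume "i \<in> {1..N}"
  then show "i \<le> \<sigma> i"
  proof (induction i)
    case (Suc i)
    then show ?case
      using inc[of i] permutes_in_image[OF \<sigma>, of 1] by (cases "i = 0") fastforce+
  qed simp
qed

lemma card_by_involution:
  assumes "finite A" "S \<subseteq> A" "\<And>x. f (f x) = x" "f ` B \<subseteq> A - S" "f ` (A - S) \<subseteq> B"
  shows "card A = card B + card S"
proof -
  have "bij_betw f B (A - S)" by (rule bij_betw_byWitness[where f' = f]) (use assms in auto)
  then have "card B = card (A - S)" by (rule bij_betw_same_card)
  with assms(1,2) show ?thesis by (simp add: card_Diff_subset card_mono finite_subset)
qed

lemma card_eq_sum_card_fibres:
  assumes "finite A" "finite R" "g ` A \<subseteq> R"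
  shows "card A = (\<Sum>r\<in>R. card {x \<in> A. g x = r})"
  using sum.group[OF assms, of "\<lambda>_. 1 :: nat"] by simp

definition skip :: "nat \<Rightarrow> nat \<Rightarrow> nat" where
  "skip v x = (if x < v then x else Suc x)"

definition unskip :: "nat \<Rightarrow> nat \<Rightarrow> nat" where
  "unskip v x = (if x \<le> v then x else x - 1)"

text \<open>In one-line notation, \<open>perm_delete i v\<close> removes the entry \<open>v = \<sigma> i\<close> and closes the
  gaps in positions and values; \<open>perm_insert i v\<close> reverses this.\<close>

definition perm_delete :: "nat \<Rightarrow> nat \<Rightarrow> (nat \<Rightarrow> nat) \<Rightarrow> nat \<Rightarrow> nat" where
  "perm_delete i v \<sigma> = (\<lambda>j. unskip v (\<sigma> (skip i j)))"

definition perm_insert :: "nat \<Rightarrow> nat \<Rightarrow> (nat \<Rightarrow> nat) \<Rightarrow> nat \<Rightarrow> nat" where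
  "perm_insert i v \<tau> = (\<lambda>j. if j = i then v else skip v (\<tau> (unskip i j)))"

lemma perm_insert_at [simp]: "perm_insert i v \<tau> i = v"
  by (simp add: perm_insert_def)

lemma unskip_skip [simp]: "unskip v (skip v x) = x"
  by (simp add: unskip_def skip_def)

lemma skip_unskip [simp]: "x \<noteq> v \<Longrightarrow> skip v (unskip v x) = x"
  by (auto simp: unskip_def skip_def)

lemma skip_neq [simp]: "skip v x \<noteq> v"
  by (simp add: skip_def)

lemma bij_betw_skip:
  assumes "v \<in> {1..Suc N}"
  shows "bij_betw (skip v) {1..N} ({1..Suc N} - {v})"
  by (rule bij_betw_byWitness[where f' = "unskip v"]) (use assms in \<open>auto simp: skip_def unskip_def\<close>)

lemma bij_betw_unskip:
  assumes "v \<in> {1..Suc N}"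
  shows "bij_betw (unskip v) ({1..Suc N} - {v}) {1..N}"
  by (rule bij_betw_byWitness[where f' = "skip v"]) (use assms in \<open>auto simp: skip_def unskip_def\<close>)

lemma permutes_perm_delete:
  assumes \<sigma>: "\<sigma> permutes {1..Suc N}" and i: "i \<in> {1..Suc N}" and v: "\<sigma> i = v"
  shows "perm_delete i v \<sigma> permutes {1..N}"
proof (rule bij_imp_permutes)
  have "v \<in> {1..Suc N}" using i v permutes_in_image[OF \<sigma>] by blast
  moreover have "bij_betw \<sigma> ({1..Suc N} - {i}) ({1..Suc N} - {v})"
    using permutes_imp_bij[OF \<sigma>] i v \<open>v \<in> {1..Suc N}\<close>
    by (intro bij_betw_DiffI) (auto simp del: atLeastAtMost_iff)
  ultimately show "bij_betw (perm_delete i v \<sigma>) {1..N} {1..N}"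
    using bij_betw_trans[OF bij_betw_trans[OF bij_betw_skip[OF i]] bij_betw_unskip]
    by (simp add: perm_delete_def comp_def)
  show "perm_delete i v \<sigma> x = x" if "x \<notin> {1..N}" for x
    using that i \<open>v \<in> {1..Suc N}\<close> permutes_not_in[OF \<sigma>, of "skip i x"]
    by (cases "x = 0") (auto simp: perm_delete_def skip_def unskip_def)
qed

lemma permutes_perm_insert:
  assumes \<tau>: "\<tau> permutes {1..N}" and i: "i \<in> {1..Suc N}" and v: "v \<in> {1..Suc N}"
  shows "perm_insert i v \<tau> permutes {1..Suc N}"
proof (rule bij_imp_permutes)
  have "bij_betw (skip v \<circ> \<tau> \<circ> unskip i) ({1..Suc N} - {i}) ({1..Suc N} - {v})"
    using bij_betw_unskip[OF i] permutes_imp_bij[OF \<tau>] bij_betw_skip[OF v]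
    by (auto intro: bij_betw_trans)
  then have "bij_betw (perm_insert i v \<tau>) ({1..Suc N} - {i}) ({1..Suc N} - {v})"
    by (rule bij_betw_cong[THEN iffD1, rotated]) (simp add: perm_insert_def)
  then have "bij_betw (perm_insert i v \<tau>) (({1..Suc N} - {i}) \<union> {i})
      (({1..Suc N} - {v}) \<union> {perm_insert i v \<tau> i})"
    by (rule notIn_Un_bij_betw[rotated 2]) auto
  then show "bij_betw (perm_insert i v \<tau>) {1..Suc N} {1..Suc N}"
    using i v by (simp add: insert_absorb)
  show "perm_insert i v \<tau> x = x" if "x \<notin> {1..Suc N}" for x
    using that i v permutes_not_in[OF \<tau>, of "unskip i x"]
    by (cases "x = 0") (auto simp: perm_insert_def skip_def unskip_def Suc_le_eq)
qed

lemma perm_insert_delete: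
  assumes "\<sigma> permutes S" and "\<sigma> i = v"
  shows "perm_insert i v (perm_delete i v \<sigma>) = \<sigma>"
  using assms permutes_eq_iff[OF assms(1)]
  by (auto simp: fun_eq_iff perm_insert_def perm_delete_def)

lemma perm_delete_insert [simp]: "perm_delete i v (perm_insert i v \<tau>) = \<tau>"
  by (simp add: fun_eq_iff perm_insert_def perm_delete_def)

lemma bij_betw_perm_delete:
  assumes "\<And>\<sigma>. \<sigma> \<in> A \<Longrightarrow> \<sigma> permutes S \<and> \<sigma> i = v \<and> perm_delete i v \<sigma> \<in> B"
    and "\<And>\<tau>. \<tau> \<in> B \<Longrightarrow> perm_insert i v \<tau> \<in> A"
  shows "bij_betw (perm_delete i v) A B"
  by (rule bij_betw_byWitness[where f' = "perm_insert i v"])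
    (use assms perm_insert_delete in \<open>fastforce+\<close>)

section \<open>Vesztergombi permutations\<close>

lemma vesztergombi_iff:
  "\<sigma> \<in> vesztergombi a b \<longleftrightarrow>
     \<sigma> permutes {1..a+b} \<and> (\<forall>i\<in>{1..a+b}. i \<le> \<sigma> i + a \<and> \<sigma> i \<le> i + b)"
  unfolding vesztergombi_def by (auto; (drule bspec, assumption)?; linarith)

lemma vesztergombi_inv:
  assumes "\<sigma> \<in> vesztergombi a b"
  shows "inv \<sigma> \<in> vesztergombi b a"
proof -
  have \<sigma>: "\<sigma> permutes {1..a+b}" and win: "\<forall>i\<in>{1..a+b}. i \<le> \<sigma> i + a \<and> \<sigma> i \<le> i + b"
    using assms by (auto simp: vesztergombi_iff)
  have "j \<le> inv \<sigma> j + b \<and> inv \<sigma> j \<le> j + a" if "j \<in> {1..a+b}" for j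
    using win permutes_in_image[OF permutes_inv[OF \<sigma>], of j] permutes_inverses(1)[OF \<sigma>, of j] that
    by (metis add_le_cancel_right le_add_diff_inverse)
  then show ?thesis using permutes_inv[OF \<sigma>] by (simp add: vesztergombi_iff add.commute)
qed

lemma bij_betw_inv_vesztergombi:
  "bij_betw inv {w \<in> vesztergombi a b. w i = r} {\<sigma> \<in> vesztergombi b a. inv \<sigma> i = r}"
proof (rule bij_betw_byWitness[where f' = inv])
  have inv_inv: "inv (inv \<sigma>) = \<sigma>" if "\<sigma> \<in> vesztergombi a b" for \<sigma> a b
    using that permutes_inv_inv by (auto simp: vesztergombi_iff)
  show "\<forall>w\<in>{w \<in> vesztergombi a b. w i = r}. inv (inv w) = w"
    "\<forall>\<sigma>\<in>{\<sigma> \<in> vesztergombi b a. inv \<sigma> i = r}. inv (inv \<sigma>) = \<sigma>"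
    using inv_inv by auto
  show "inv ` {w \<in> vesztergombi a b. w i = r} \<subseteq> {\<sigma> \<in> vesztergombi b a. inv \<sigma> i = r}"
    "inv ` {\<sigma> \<in> vesztergombi b a. inv \<sigma> i = r} \<subseteq> {w \<in> vesztergombi a b. w i = r}"
    using vesztergombi_inv inv_inv by auto
qed

lemma vesztergombi_degenerate: "a = 0 \<or> b = 0 \<Longrightarrow> vesztergombi a b = {id}"
  using permutes_eq_id_if_ge[of _ b] permutes_eq_id_if_le[of _ a]
  by (auto simp: vesztergombi_iff permutes_id)

lemma vesztergombi_perm_delete:
  assumes \<sigma>: "\<sigma> \<in> vesztergombi a b" and i: "i \<in> {1..a+b}" and v: "\<sigma> i = v"
    and N: "Suc (a' + b') = a + b"
    and window: "\<And>k x. k \<in> {1..a+b} \<Longrightarrow> x \<in> {1..a+b} \<Longrightarrow> k \<noteq> i \<Longrightarrow> x \<noteq> v \<Longrightarrow>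
      k \<le> x + a \<Longrightarrow> x \<le> k + b \<Longrightarrow> unskip i k \<le> unskip v x + a' \<and> unskip v x \<le> unskip i k + b'"
  shows "perm_delete i v \<sigma> \<in> vesztergombi a' b'"
proof -
  have perm: "\<sigma> permutes {1..Suc (a' + b')}" and win: "\<forall>k\<in>{1..a+b}. k \<le> \<sigma> k + a \<and> \<sigma> k \<le> k + b"
    using \<sigma> N by (auto simp: vesztergombi_iff)
  have "j \<le> perm_delete i v \<sigma> j + a' \<and> perm_delete i v \<sigma> j \<le> j + b'" if j: "j \<in> {1..a'+b'}" for j
  proof -
    have k: "skip i j \<in> {1..a+b}" "skip i j \<noteq> i" using i j N by (auto simp: skip_def)
    then have "\<sigma> (skip i j) \<in> {1..a+b}" "\<sigma> (skip i j) \<noteq> v"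
      using perm N permutes_in_image permutes_eq_iff[OF perm] v by metis+
    then show ?thesis using window[OF k(1) _ k(2)] win k(1) by (simp add: perm_delete_def)
  qed
  then show ?thesis using permutes_perm_delete[OF perm _ v] i N by (simp add: vesztergombi_iff)
qed

lemma vesztergombi_perm_insert:
  assumes \<tau>: "\<tau> \<in> vesztergombi a' b'" and N: "Suc (a' + b') = a + b"
    and iv: "i \<in> {1..a+b}" "v \<in> {1..a+b}" "i \<le> v + a" "v \<le> i + b"
    and window: "\<And>k x. k \<in> {1..a'+b'} \<Longrightarrow> x \<in> {1..a'+b'} \<Longrightarrow> k \<le> x + a' \<Longrightarrow> x \<le> k + b' \<Longrightarrow>
      skip i k \<le> skip v x + a \<and> skip v x \<le> skip i k + b"
  shows "perm_insert i v \<tau> \<in> vesztergombi a b"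
proof -
  have perm: "\<tau> permutes {1..a'+b'}" and win: "\<forall>k\<in>{1..a'+b'}. k \<le> \<tau> k + a' \<and> \<tau> k \<le> k + b'"
    using \<tau> by (auto simp: vesztergombi_iff)
  have "j \<le> perm_insert i v \<tau> j + a \<and> perm_insert i v \<tau> j \<le> j + b" if j: "j \<in> {1..a+b}" for j
  proof (cases "j = i")
    case False
    then have k: "unskip i j \<in> {1..a'+b'}" using j iv N by (auto simp: unskip_def)
    then have "\<tau> (unskip i j) \<in> {1..a'+b'}" using perm permutes_in_image by metis
    then show ?thesis
      using window[OF k] win k False by (simp add: perm_insert_def)
  qed (use iv in simp)
  then show ?thesis using permutes_perm_insert[OF perm, of i v] iv N by (simp add: vesztergombi_iff)
qed

lemma bij_betw_vesztergombi_perm_delete: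
  assumes N: "Suc (a' + b') = a + b" and iv: "i \<in> {1..a+b}" "v \<in> {1..a+b}" "i \<le> v + a" "v \<le> i + b"
    and window_delete: "\<And>k x. k \<in> {1..a+b} \<Longrightarrow> x \<in> {1..a+b} \<Longrightarrow> k \<noteq> i \<Longrightarrow> x \<noteq> v \<Longrightarrow>
      k \<le> x + a \<Longrightarrow> x \<le> k + b \<Longrightarrow> unskip i k \<le> unskip v x + a' \<and> unskip v x \<le> unskip i k + b'"
    and window_insert: "\<And>k x. k \<in> {1..a'+b'} \<Longrightarrow> x \<in> {1..a'+b'} \<Longrightarrow> k \<le> x + a' \<Longrightarrow> x \<le> k + b' \<Longrightarrow>
      skip i k \<le> skip v x + a \<and> skip v x \<le> skip i k + b"
  shows "bij_betw (perm_delete i v) {\<sigma> \<in> vesztergombi a b. \<sigma> i = v} (vesztergombi a' b')"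
proof (rule bij_betw_perm_delete)
  fix \<sigma> assume "\<sigma> \<in> {\<sigma> \<in> vesztergombi a b. \<sigma> i = v}"
  then show "\<sigma> permutes {1..a+b} \<and> \<sigma> i = v \<and> perm_delete i v \<sigma> \<in> vesztergombi a' b'"
    using vesztergombi_perm_delete[OF _ iv(1) _ N window_delete] by (auto simp: vesztergombi_iff)
next
  fix \<tau> assume "\<tau> \<in> vesztergombi a' b'"
  then show "perm_insert i v \<tau> \<in> {\<sigma> \<in> vesztergombi a b. \<sigma> i = v}"
    using vesztergombi_perm_insert[OF _ N iv window_insert] by simp
qed

definition vesztergombi_pos :: "nat \<Rightarrow> nat \<Rightarrow> nat \<Rightarrow> (nat \<Rightarrow> nat) set" where
  "vesztergombi_pos a b r = {\<sigma> \<in> vesztergombi a b. \<sigma> r = b + 1}"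

lemma vesztergombi_pos_conv_inv:
  "vesztergombi_pos a b r = {\<sigma> \<in> vesztergombi a b. inv \<sigma> (b + 1) = r}"
  using permutes_inv_eq by (fastforce simp: vesztergombi_pos_def vesztergombi_iff)

lemma finite_vesztergombi_pos: "finite (vesztergombi_pos a b r)"
  by (rule finite_subset[OF _ finite_permutations[of "{1..a+b}"]])
    (auto simp: vesztergombi_pos_def vesztergombi_iff)

lemma card_vesztergombi_eq_sum_pos:
  assumes "1 \<le> a"
  shows "card (vesztergombi a b) = (\<Sum>r\<in>{1..a+b}. card (vesztergombi_pos a b r))"
proof -
  have fin: "finite (vesztergombi a b)"
    by (rule finite_subset[OF _ finite_permutations[of "{1..a+b}"]]) (auto simp: vesztergombi_iff)
  have "(\<lambda>\<sigma>. inv \<sigma> (b + 1)) ` vesztergombi a b \<subseteq> {1..a+b}"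
    using assms permutes_in_image[OF permutes_inv, of _ "{1..a+b}" "b + 1"]
    by (auto simp: vesztergombi_iff)
  from card_eq_sum_card_fibres[OF fin finite_atLeastAtMost this]
  show ?thesis by (simp add: vesztergombi_pos_conv_inv)
qed

lemma bij_betw_vesztergombi_delete_max:
  assumes "1 \<le> i" "i \<le> a"
  shows "bij_betw (perm_delete i (i + b))
    {\<sigma> \<in> vesztergombi a b. \<sigma> i = i + b} (vesztergombi (a - 1) b)"
  by (rule bij_betw_vesztergombi_perm_delete) (use assms in \<open>auto simp: skip_def unskip_def\<close>)

lemma bij_betw_vesztergombi_delete_min:
  assumes "a < i" "i \<le> a + b"
  shows "bij_betw (perm_delete i (i - a))
    {\<sigma> \<in> vesztergombi a b. \<sigma> i = i - a} (vesztergombi a (b - 1))"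
  by (rule bij_betw_vesztergombi_perm_delete) (use assms in \<open>auto simp: skip_def unskip_def\<close>)

lemma bij_betw_vesztergombi_pos_last:
  assumes "1 \<le> a" "1 \<le> b"
  shows "bij_betw (perm_delete (a + b) (b + 1))
    (vesztergombi_pos a b (a + b)) (vesztergombi a (b - 1))"
  unfolding vesztergombi_pos_def
  by (rule bij_betw_vesztergombi_perm_delete) (use assms in \<open>auto simp: skip_def unskip_def\<close>)

lemma vesztergombi_swap_positions:
  assumes \<sigma>: "\<sigma> \<in> vesztergombi a b" and r: "1 \<le> r" "r < a + b"
    and "\<sigma> r + a \<noteq> r" "\<sigma> (Suc r) \<noteq> Suc r + b"
  shows "\<sigma> \<circ> transpose r (Suc r) \<in> vesztergombi a b"
proof -
  have "\<sigma> \<circ> transpose r (Suc r) permutes {1..a+b}"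
    using \<sigma> r by (intro permutes_compose[OF permutes_swap_id]) (auto simp: vesztergombi_iff)
  moreover have "\<forall>k\<in>{1..a+b}. k \<le> \<sigma> k + a \<and> \<sigma> k \<le> k + b" using \<sigma> by (simp add: vesztergombi_iff)
  then have "\<forall>k\<in>{1..a+b}. k \<le> (\<sigma> \<circ> transpose r (Suc r)) k + a \<and> (\<sigma> \<circ> transpose r (Suc r)) k \<le> k + b"
    using assms(4,5) r by (auto simp: transpose_def dest: bspec[of _ _ r] bspec[of _ _ "Suc r"])
  ultimately show ?thesis by (simp add: vesztergombi_iff)
qed

lemma card_vesztergombi_pos_low:
  assumes r: "1 \<le> r" "r < a"
  shows "card (vesztergombi_pos a b r) =
    card (vesztergombi_pos a b (Suc r)) + card (vesztergombi_pos (a - 1) b r)"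
proof -
  let ?S = "{\<sigma> \<in> vesztergombi_pos a b r. \<sigma> (Suc r) = Suc r + b}"
  have "card (vesztergombi_pos a b r) = card (vesztergombi_pos a b (Suc r)) + card ?S"
  proof (rule card_by_involution[OF finite_vesztergombi_pos, where f = "\<lambda>\<sigma>. \<sigma> \<circ> transpose r (Suc r)"])
    show "(\<lambda>\<sigma>. \<sigma> \<circ> transpose r (Suc r)) ` vesztergombi_pos a b (Suc r) \<subseteq> vesztergombi_pos a b r - ?S"
    proof (rule image_subsetI)
      fix \<sigma> assume "\<sigma> \<in> vesztergombi_pos a b (Suc r)"
      then have "\<sigma> \<in> vesztergombi a b" "\<sigma> (Suc r) = b + 1" "\<sigma> r \<le> r + b"
        using r by (auto simp: vesztergombi_pos_def vesztergombi_iff)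
      then show "(\<lambda>\<sigma>. \<sigma> \<circ> transpose r (Suc r)) \<sigma> \<in> vesztergombi_pos a b r - ?S"
        using vesztergombi_swap_positions[of \<sigma> a b r] r by (auto simp: vesztergombi_pos_def)
    qed
    show "(\<lambda>\<sigma>. \<sigma> \<circ> transpose r (Suc r)) ` (vesztergombi_pos a b r - ?S) \<subseteq> vesztergombi_pos a b (Suc r)"
      using vesztergombi_swap_positions[of _ a b r] r by (auto simp: vesztergombi_pos_def)
  qed (auto simp: comp_assoc)
  moreover have "bij_betw (perm_delete (Suc r) (Suc r + b)) ?S (vesztergombi_pos (a - 1) b r)"
  proof -
    have "bij_betw (perm_delete (Suc r) (Suc r + b))
      {\<sigma> \<in> {\<sigma> \<in> vesztergombi a b. \<sigma> (Suc r) = Suc r + b}. \<sigma> r = b + 1}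
      {\<tau> \<in> vesztergombi (a - 1) b. \<tau> r = b + 1}"
    proof (rule bij_betw_Collect[OF bij_betw_vesztergombi_delete_max])
      fix \<sigma> assume "\<sigma> \<in> {\<sigma> \<in> vesztergombi a b. \<sigma> (Suc r) = Suc r + b}"
      then have "\<sigma> r \<le> r + b" using r by (auto simp: vesztergombi_iff)
      then show "perm_delete (Suc r) (Suc r + b) \<sigma> r = b + 1 \<longleftrightarrow> \<sigma> r = b + 1"
        by (auto simp: perm_delete_def skip_def unskip_def)
    qed (use r in auto)
    then show ?thesis by (simp add: vesztergombi_pos_def conj_ac)
  qed
  ultimately show ?thesis by (simp add: bij_betw_same_card)
qed

lemma card_vesztergombi_pos_high:
  assumes r: "a < r" "r < a + b"
  shows "card (vesztergombi_pos a b (Suc r)) =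
    card (vesztergombi_pos a b r) + card (vesztergombi_pos a (b - 1) r)"
proof -
  let ?S = "{\<sigma> \<in> vesztergombi_pos a b (Suc r). \<sigma> r = r - a}"
  have "card (vesztergombi_pos a b (Suc r)) = card (vesztergombi_pos a b r) + card ?S"
  proof (rule card_by_involution[OF finite_vesztergombi_pos, where f = "\<lambda>\<sigma>. \<sigma> \<circ> transpose r (Suc r)"])
    show "(\<lambda>\<sigma>. \<sigma> \<circ> transpose r (Suc r)) ` vesztergombi_pos a b r \<subseteq> vesztergombi_pos a b (Suc r) - ?S"
    proof (rule image_subsetI)
      fix \<sigma> assume "\<sigma> \<in> vesztergombi_pos a b r"
      then have "\<sigma> \<in> vesztergombi a b" "\<sigma> r = b + 1" "\<sigma> (Suc r) \<le> a + b" "Suc r \<le> \<sigma> (Suc r) + a"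
        using r permutes_in_image[of \<sigma> "{1..a+b}" "Suc r"]
        by (auto simp: vesztergombi_pos_def vesztergombi_iff)
      then show "(\<lambda>\<sigma>. \<sigma> \<circ> transpose r (Suc r)) \<sigma> \<in> vesztergombi_pos a b (Suc r) - ?S"
        using vesztergombi_swap_positions[of \<sigma> a b r] r by (auto simp: vesztergombi_pos_def)
    qed
    show "(\<lambda>\<sigma>. \<sigma> \<circ> transpose r (Suc r)) ` (vesztergombi_pos a b (Suc r) - ?S) \<subseteq> vesztergombi_pos a b r"
    proof (rule image_subsetI)
      fix \<sigma> assume "\<sigma> \<in> vesztergombi_pos a b (Suc r) - ?S"
      then have "\<sigma> \<in> vesztergombi a b" "\<sigma> (Suc r) = b + 1" "\<sigma> r + a \<noteq> r"
        using r by (auto simp: vesztergombi_pos_def)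
      then show "(\<lambda>\<sigma>. \<sigma> \<circ> transpose r (Suc r)) \<sigma> \<in> vesztergombi_pos a b r"
        using vesztergombi_swap_positions[of \<sigma> a b r] r by (auto simp: vesztergombi_pos_def)
    qed
  qed (auto simp: comp_assoc)
  moreover have "bij_betw (perm_delete r (r - a)) ?S (vesztergombi_pos a (b - 1) r)"
  proof -
    have "bij_betw (perm_delete r (r - a))
      {\<sigma> \<in> {\<sigma> \<in> vesztergombi a b. \<sigma> r = r - a}. \<sigma> (Suc r) = b + 1}
      {\<tau> \<in> vesztergombi a (b - 1). \<tau> r = b}"
    proof (rule bij_betw_Collect[OF bij_betw_vesztergombi_delete_min])
      fix \<sigma> assume "\<sigma> \<in> {\<sigma> \<in> vesztergombi a b. \<sigma> r = r - a}"
      then have "\<sigma> (Suc r) \<noteq> r - a"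
        using permutes_eq_iff[of \<sigma> _ r "Suc r"] by (auto simp: vesztergombi_iff)
      then show "perm_delete r (r - a) \<sigma> r = b \<longleftrightarrow> \<sigma> (Suc r) = b + 1"
        using r by (auto simp: perm_delete_def skip_def unskip_def)
    qed (use r in auto)
    then show ?thesis using r by (simp add: vesztergombi_pos_def conj_ac)
  qed
  ultimately show ?thesis by (simp add: bij_betw_same_card)
qed

section \<open>Callan permutations\<close>

definition callan_adj :: "nat \<Rightarrow> nat \<Rightarrow> nat \<Rightarrow> bool" where
  "callan_adj m x y \<longleftrightarrow> (x \<le> m \<and> y \<le> m \<longrightarrow> x < y) \<and> (m < x \<and> m < y \<longrightarrow> y < x)"

lemma callan_iff:
  "\<tau> \<in> callan a b \<longleftrightarrow>
     \<tau> permutes {1..a+b} \<and> (\<forall>i. 1 \<le> i \<and> i + 1 \<le> a + b \<longrightarrow> callan_adj a (\<tau> i) (\<tau> (i + 1)))"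
  unfolding callan_def callan_adj_def by auto

definition callan_first :: "nat \<Rightarrow> nat \<Rightarrow> nat \<Rightarrow> (nat \<Rightarrow> nat) set" where
  "callan_first a b r = {\<tau> \<in> callan a b. \<tau> 1 = r}"

lemma finite_callan_first: "finite (callan_first a b r)"
  by (rule finite_subset[OF _ finite_permutations[of "{1..a+b}"]])
    (auto simp: callan_first_def callan_iff)

lemma card_callan_eq_sum_first:
  assumes "1 \<le> a + b"
  shows "card (callan a b) = (\<Sum>r\<in>{1..a+b}. card (callan_first a b r))"
proof -
  have fin: "finite (callan a b)"
    by (rule finite_subset[OF _ finite_permutations[of "{1..a+b}"]]) (auto simp: callan_iff)
  have "(\<lambda>\<tau>. \<tau> 1) ` callan a b \<subseteq> {1..a+b}"
    using assms permutes_in_image[of _ "{1..a+b}" 1] by (auto simp: callan_iff)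
  then show ?thesis
    using card_eq_sum_card_fibres[OF fin finite_atLeastAtMost] by (simp add: callan_first_def)
qed

lemma callan_no_large: "callan a 0 = {id}"
proof -
  have "\<tau> = id" if \<tau>: "\<tau> \<in> callan a 0" for \<tau>
  proof (rule permutes_eq_id_if_increasing)
    show perm: "\<tau> permutes {1..a}" using \<tau> by (simp add: callan_iff)
    fix i assume "1 \<le> i" "Suc i \<le> a"
    then show "\<tau> i < \<tau> (Suc i)"
      using \<tau> permutes_in_image[OF perm, of i] permutes_in_image[OF perm, of "Suc i"]
      by (auto simp: callan_iff callan_adj_def)
  qed
  then show ?thesis by (auto simp: callan_iff callan_adj_def permutes_id)
qed

definition value_reversal :: "nat \<Rightarrow> nat \<Rightarrow> nat" where
  "value_reversal N x = (if x \<in> {1..N} then Suc N - x else x)"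

lemma value_reversal_involution [simp]: "value_reversal N (value_reversal N x) = x"
  by (auto simp: value_reversal_def)

lemma value_reversal_permutes: "value_reversal N permutes {1..N}"
  by (rule bij_imp_permutes, rule bij_betw_byWitness[where f' = "value_reversal N"])
    (auto simp: value_reversal_def)

lemma callan_no_small: "callan 0 b = {value_reversal b}"
proof -
  have "\<tau> = value_reversal b" if \<tau>: "\<tau> \<in> callan 0 b" for \<tau>
  proof -
    have perm: "\<tau> permutes {1..b}" using \<tau> by (simp add: callan_iff)
    have "value_reversal b \<circ> \<tau> = id"
    proof (rule permutes_eq_id_if_increasing[OF permutes_compose[OF perm value_reversal_permutes]])
      fix i assume "1 \<le> i" "Suc i \<le> b"
      then show "(value_reversal b \<circ> \<tau>) i < (value_reversal b \<circ> \<tau>) (Suc i)"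
        using \<tau> permutes_in_image[OF perm, of i] permutes_in_image[OF perm, of "Suc i"]
        by (auto simp: callan_iff callan_adj_def value_reversal_def)
    qed
    then have "value_reversal b (value_reversal b (\<tau> x)) = value_reversal b x" for x
      by (metis comp_apply id_apply)
    then show ?thesis by (simp add: fun_eq_iff value_reversal_involution)
  qed
  moreover have "value_reversal b \<in> callan 0 b"
    using value_reversal_permutes[of b] by (auto simp: callan_iff callan_adj_def value_reversal_def)
  ultimately show ?thesis by blast
qed

lemma callan_adj_unskip_small:
  "x \<noteq> v \<Longrightarrow> y \<noteq> v \<Longrightarrow> 1 \<le> v \<Longrightarrow> v \<le> a \<Longrightarrow>
    callan_adj (a - 1) (unskip v x) (unskip v y) = callan_adj a x y"
  unfolding callan_adj_def unskip_def by auto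

lemma callan_adj_unskip_large:
  "x \<noteq> v \<Longrightarrow> y \<noteq> v \<Longrightarrow> a < v \<Longrightarrow> callan_adj a (unskip v x) (unskip v y) = callan_adj a x y"
  unfolding callan_adj_def unskip_def by auto

lemma callan_perm_delete_first_iff:
  assumes \<tau>: "\<tau> permutes {1..a+b}" "\<tau> 1 = v" and N: "Suc (a' + b') = a + b"
    and adj: "\<And>x y. x \<noteq> v \<Longrightarrow> y \<noteq> v \<Longrightarrow> callan_adj a' (unskip v x) (unskip v y) = callan_adj a x y"
  shows "\<tau> \<in> callan a b \<longleftrightarrow>
    (2 \<le> a + b \<longrightarrow> callan_adj a v (\<tau> 2)) \<and> perm_delete 1 v \<tau> \<in> callan a' b'"
proof -
  let ?P = "\<lambda>i. callan_adj a (\<tau> i) (\<tau> (i + 1))"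
  have "perm_delete 1 v \<tau> permutes {1..a'+b'}"
    using permutes_perm_delete[of \<tau> "a' + b'" 1 v] \<tau> N by simp
  moreover have "callan_adj a' (perm_delete 1 v \<tau> i) (perm_delete 1 v \<tau> (i + 1)) = ?P (Suc i)"
    if "1 \<le> i" for i
    using that adj permutes_eq_iff[OF \<tau>(1), of _ 1] \<tau>(2) by (simp add: perm_delete_def skip_def)
  moreover have "(\<forall>i. 1 \<le> i \<and> i + 1 \<le> a + b \<longrightarrow> ?P i) \<longleftrightarrow>
      (2 \<le> a + b \<longrightarrow> ?P 1) \<and> (\<forall>i. 1 \<le> i \<and> i + 1 \<le> a' + b' \<longrightarrow> ?P (Suc i))"
  proof (intro iffI conjI allI impI)
    fix i assume "\<forall>i. 1 \<le> i \<and> i + 1 \<le> a + b \<longrightarrow> ?P i" and "1 \<le> i \<and> i + 1 \<le> a' + b'"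
    then show "?P (Suc i)" using N by simp
  next
    fix i assume h: "(2 \<le> a + b \<longrightarrow> ?P 1) \<and> (\<forall>i. 1 \<le> i \<and> i + 1 \<le> a' + b' \<longrightarrow> ?P (Suc i))"
      and i: "1 \<le> i \<and> i + 1 \<le> a + b"
    show "?P i"
    proof (cases i)
      case (Suc j)
      then show ?thesis using h i N by (cases j) auto
    qed (use i in simp)
  qed simp
  ultimately show ?thesis using \<tau> by (simp add: callan_iff numeral_2_eq_2)
qed

lemma bij_betw_callan_first_delete:
  assumes N: "Suc (a' + b') = a + b" and v: "v \<in> {1..a+b}"
    and adj: "\<And>x y. x \<noteq> v \<Longrightarrow> y \<noteq> v \<Longrightarrow> callan_adj a' (unskip v x) (unskip v y) = callan_adj a x y"
  shows "bij_betw (perm_delete 1 v) {\<tau> \<in> callan_first a b v. P (\<tau> 2)}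
    {\<tau> \<in> callan a' b'. P (skip v (\<tau> 1)) \<and> (2 \<le> a + b \<longrightarrow> callan_adj a v (skip v (\<tau> 1)))}"
proof (rule bij_betw_perm_delete)
  fix \<tau> assume "\<tau> \<in> {\<tau> \<in> callan_first a b v. P (\<tau> 2)}"
  then have \<tau>: "\<tau> permutes {1..a+b}" "\<tau> 1 = v" "\<tau> \<in> callan a b" "P (\<tau> 2)"
    by (auto simp: callan_first_def callan_iff)
  moreover have "perm_delete 1 v \<tau> 1 = unskip v (\<tau> 2)"
    by (simp add: perm_delete_def skip_def numeral_2_eq_2)
  then have "skip v (perm_delete 1 v \<tau> 1) = \<tau> 2"
    using permutes_eq_iff[OF \<tau>(1), of 2 1] \<tau>(2) by simp
  ultimately show "\<tau> permutes {1..a+b} \<and> \<tau> 1 = v \<and> perm_delete 1 v \<tau> \<in>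
      {\<tau> \<in> callan a' b'. P (skip v (\<tau> 1)) \<and> (2 \<le> a + b \<longrightarrow> callan_adj a v (skip v (\<tau> 1)))}"
    using callan_perm_delete_first_iff[OF \<tau>(1,2) N adj] by auto
next
  fix \<tau> assume "\<tau> \<in> {\<tau> \<in> callan a' b'. P (skip v (\<tau> 1)) \<and> (2 \<le> a + b \<longrightarrow> callan_adj a v (skip v (\<tau> 1)))}"
  then have \<tau>: "\<tau> \<in> callan a' b'" "P (skip v (\<tau> 1))" "2 \<le> a + b \<longrightarrow> callan_adj a v (skip v (\<tau> 1))"
    by auto
  have perm: "perm_insert 1 v \<tau> permutes {1..a+b}"
    using permutes_perm_insert[of \<tau> "a' + b'" 1 v] \<tau>(1) v N by (simp add: callan_iff)
  have "perm_insert 1 v \<tau> 2 = skip v (\<tau> 1)" by (simp add: perm_insert_def unskip_def)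
  then show "perm_insert 1 v \<tau> \<in> {\<tau> \<in> callan_first a b v. P (\<tau> 2)}"
    using callan_perm_delete_first_iff[OF perm perm_insert_at N adj] \<tau> by (simp add: callan_first_def)
qed

lemma card_callan_first_first:
  assumes "1 \<le> a"
  shows "card (callan_first a b 1) = card (callan (a - 1) b)"
proof -
  have "bij_betw (perm_delete 1 1) {\<tau> \<in> callan_first a b 1. True}
    {\<tau> \<in> callan (a - 1) b. True \<and> (2 \<le> a + b \<longrightarrow> callan_adj a 1 (skip 1 (\<tau> 1)))}"
    using assms by (intro bij_betw_callan_first_delete callan_adj_unskip_small) auto
  moreover have "\<tau> 1 \<noteq> 0" if "\<tau> \<in> callan (a - 1) b" for \<tau>
    using that permutes_eq_iff[of \<tau> _ 1 0] permutes_not_in[of \<tau> _ 0] by (force simp: callan_iff)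
  then have "{\<tau> \<in> callan (a - 1) b. True \<and> (2 \<le> a + b \<longrightarrow> callan_adj a 1 (skip 1 (\<tau> 1)))} =
      callan (a - 1) b"
    using assms by (force simp: callan_adj_def skip_def)
  ultimately show ?thesis by (simp add: bij_betw_same_card)
qed

lemma card_callan_first_last:
  assumes "1 \<le> a" "1 \<le> b"
  shows "card (callan_first a b (a + b)) = card (callan a (b - 1))"
proof -
  have "bij_betw (perm_delete 1 (a + b)) {\<tau> \<in> callan_first a b (a + b). True}
    {\<tau> \<in> callan a (b - 1). True \<and> (2 \<le> a + b \<longrightarrow> callan_adj a (a + b) (skip (a + b) (\<tau> 1)))}"
    using assms by (intro bij_betw_callan_first_delete callan_adj_unskip_large) auto
  moreover have "\<tau> 1 \<in> {1..a + (b - 1)}" if "\<tau> \<in> callan a (b - 1)" for \<tau>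
    using that assms permutes_in_image[of \<tau> "{1..a + (b - 1)}" 1] by (simp add: callan_iff)
  then have "{\<tau> \<in> callan a (b - 1). True \<and> (2 \<le> a + b \<longrightarrow> callan_adj a (a + b) (skip (a + b) (\<tau> 1)))} =
      callan a (b - 1)"
    using assms by (force simp: callan_adj_def skip_def)
  ultimately show ?thesis by (simp add: bij_betw_same_card)
qed

lemma callan_adj_transpose:
  "Suc r \<le> a \<or> a < r \<Longrightarrow> {x, y} \<noteq> {r, Suc r} \<Longrightarrow>
    callan_adj a (transpose r (Suc r) x) (transpose r (Suc r) y) = callan_adj a x y"
  unfolding callan_adj_def transpose_def doubleton_eq_iff by (simp split: if_splits; arith)

lemma callan_swap_values:
  assumes \<tau>: "\<tau> \<in> callan a b" and r: "1 \<le> r" "Suc r \<le> a + b" "Suc r \<le> a \<or> a < r"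
    and apart: "\<And>i. 1 \<le> i \<Longrightarrow> {\<tau> i, \<tau> (Suc i)} \<noteq> {r, Suc r}"
  shows "transpose r (Suc r) \<circ> \<tau> \<in> callan a b"
proof -
  have "transpose r (Suc r) \<circ> \<tau> permutes {1..a+b}"
    using \<tau> r by (intro permutes_compose[OF _ permutes_swap_id]) (auto simp: callan_iff)
  then show ?thesis
    using \<tau> callan_adj_transpose[OF r(3) apart] by (simp add: callan_iff)
qed

lemma first_entry_apart:
  assumes "\<tau> permutes S" "\<tau> 1 = x" "\<tau> 2 \<noteq> y" "1 \<le> i"
  shows "{\<tau> i, \<tau> (Suc i)} \<noteq> {x, y}"
  using assms permutes_eq_iff[OF assms(1), of i 1] permutes_eq_iff[OF assms(1), of "Suc i" 1]
    permutes_eq_iff[OF assms(1), of 2 1]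
  by (cases "i = 1") (auto simp: doubleton_eq_iff numeral_2_eq_2)

lemma callan_first_swap:
  assumes \<tau>: "\<tau> \<in> callan_first a b x" and "\<tau> 2 \<noteq> y" "{x, y} = {r, Suc r}"
    and r: "1 \<le> r" "Suc r \<le> a + b" "Suc r \<le> a \<or> a < r"
  shows "transpose r (Suc r) \<circ> \<tau> \<in> callan_first a b y"
  using assms first_entry_apart[of \<tau> "{1..a+b}" x y] callan_swap_values[of \<tau> a b r]
  by (auto simp: callan_first_def callan_iff doubleton_eq_iff insert_commute)

lemma card_callan_first_low:
  assumes r: "1 \<le> r" "r < a"
  shows "card (callan_first a b r) = card (callan_first a b (Suc r)) + card (callan_first (a - 1) b r)"
proof -
  let ?S = "{\<tau> \<in> callan_first a b r. \<tau> 2 = Suc r}"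
  have swap: "transpose r (Suc r) \<circ> \<tau> \<in> callan_first a b y"
    if "\<tau> \<in> callan_first a b x" "\<tau> 2 \<noteq> y" "{x, y} = {r, Suc r}" for \<tau> x y
    using callan_first_swap[OF that] r by simp
  have "card (callan_first a b r) = card (callan_first a b (Suc r)) + card ?S"
  proof (rule card_by_involution[OF finite_callan_first, where f = "\<lambda>\<tau>. transpose r (Suc r) \<circ> \<tau>"])
    show "(\<lambda>\<tau>. transpose r (Suc r) \<circ> \<tau>) ` callan_first a b (Suc r) \<subseteq> callan_first a b r - ?S"
    proof (rule image_subsetI)
      fix \<tau> assume \<tau>: "\<tau> \<in> callan_first a b (Suc r)"
      then have "callan_adj a (\<tau> 1) (\<tau> 2)" "\<tau> 1 = Suc r"
        using r by (auto simp: callan_first_def callan_iff numeral_2_eq_2)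
      then have "\<tau> 2 \<noteq> r" using r by (auto simp: callan_adj_def)
      then show "(\<lambda>\<tau>. transpose r (Suc r) \<circ> \<tau>) \<tau> \<in> callan_first a b r - ?S"
        using swap[OF \<tau>] by (auto simp: transpose_def)
    qed
    show "(\<lambda>\<tau>. transpose r (Suc r) \<circ> \<tau>) ` (callan_first a b r - ?S) \<subseteq> callan_first a b (Suc r)"
      using swap by auto
  qed (auto simp: comp_assoc)
  moreover have "bij_betw (perm_delete 1 r) ?S (callan_first (a - 1) b r)"
  proof -
    have "bij_betw (perm_delete 1 r) {\<tau> \<in> callan_first a b r. \<tau> 2 = Suc r}
      {\<tau> \<in> callan (a - 1) b. skip r (\<tau> 1) = Suc r \<and> (2 \<le> a + b \<longrightarrow> callan_adj a r (skip r (\<tau> 1)))}"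
      using r by (intro bij_betw_callan_first_delete callan_adj_unskip_small) auto
    moreover have "{\<tau> \<in> callan (a - 1) b. skip r (\<tau> 1) = Suc r \<and>
        (2 \<le> a + b \<longrightarrow> callan_adj a r (skip r (\<tau> 1)))} = callan_first (a - 1) b r"
      using r by (auto simp: callan_first_def callan_adj_def skip_def split: if_splits)
    ultimately show ?thesis by simp
  qed
  ultimately show ?thesis by (simp add: bij_betw_same_card)
qed

lemma card_callan_first_high:
  assumes r: "a < r" "r < a + b"
  shows "card (callan_first a b (Suc r)) = card (callan_first a b r) + card (callan_first a (b - 1) r)"
proof -
  let ?S = "{\<tau> \<in> callan_first a b (Suc r). \<tau> 2 = r}"
  have swap: "transpose r (Suc r) \<circ> \<tau> \<in> callan_first a b y"
    if "\<tau> \<in> callan_first a b x" "\<tau> 2 \<noteq> y" "{x, y} = {r, Suc r}" for \<tau> x y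
    using callan_first_swap[OF that] r by simp
  have "card (callan_first a b (Suc r)) = card (callan_first a b r) + card ?S"
  proof (rule card_by_involution[OF finite_callan_first, where f = "\<lambda>\<tau>. transpose r (Suc r) \<circ> \<tau>"])
    show "(\<lambda>\<tau>. transpose r (Suc r) \<circ> \<tau>) ` callan_first a b r \<subseteq> callan_first a b (Suc r) - ?S"
    proof (rule image_subsetI)
      fix \<tau> assume \<tau>: "\<tau> \<in> callan_first a b r"
      then have "callan_adj a (\<tau> 1) (\<tau> 2)" "\<tau> 1 = r"
        using r by (auto simp: callan_first_def callan_iff numeral_2_eq_2)
      then have "\<tau> 2 \<noteq> Suc r" using r by (auto simp: callan_adj_def)
      then show "(\<lambda>\<tau>. transpose r (Suc r) \<circ> \<tau>) \<tau> \<in> callan_first a b (Suc r) - ?S"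
        using swap[OF \<tau>] by (auto simp: transpose_def)
    qed
    show "(\<lambda>\<tau>. transpose r (Suc r) \<circ> \<tau>) ` (callan_first a b (Suc r) - ?S) \<subseteq> callan_first a b r"
      using swap by auto
  qed (auto simp: comp_assoc)
  moreover have "bij_betw (perm_delete 1 (Suc r)) ?S (callan_first a (b - 1) r)"
  proof -
    have "bij_betw (perm_delete 1 (Suc r)) {\<tau> \<in> callan_first a b (Suc r). \<tau> 2 = r}
      {\<tau> \<in> callan a (b - 1). skip (Suc r) (\<tau> 1) = r \<and>
        (2 \<le> a + b \<longrightarrow> callan_adj a (Suc r) (skip (Suc r) (\<tau> 1)))}"
      using r by (intro bij_betw_callan_first_delete callan_adj_unskip_large) auto
    moreover have "{\<tau> \<in> callan a (b - 1). skip (Suc r) (\<tau> 1) = r \<and>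
        (2 \<le> a + b \<longrightarrow> callan_adj a (Suc r) (skip (Suc r) (\<tau> 1)))} = callan_first a (b - 1) r"
      using r by (auto simp: callan_first_def callan_adj_def skip_def split: if_splits)
    ultimately show ?thesis by simp
  qed
  ultimately show ?thesis by (simp add: bij_betw_same_card)
qed

section \<open>Equinumerosity\<close>

lemma card_vesztergombi_degenerate: "a = 0 \<or> b = 0 \<Longrightarrow> card (vesztergombi a b) = card (callan a b)"
  using vesztergombi_degenerate callan_no_large callan_no_small by auto

lemma card_vesztergombi_pos_eq_card_callan_first_step:
  assumes a: "1 \<le> a" and b: "1 \<le> b" and r: "r \<in> {1..a+b}"
    and total: "card (vesztergombi (a - 1) b) = card (callan (a - 1) b)"
      "card (vesztergombi a (b - 1)) = card (callan a (b - 1))"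
    and low: "\<And>r. 1 \<le> r \<Longrightarrow> r < a \<Longrightarrow>
      card (vesztergombi_pos (a - 1) b r) = card (callan_first (a - 1) b r)"
    and high: "\<And>r. a < r \<Longrightarrow> r < a + b \<Longrightarrow>
      card (vesztergombi_pos a (b - 1) r) = card (callan_first a (b - 1) r)"
  shows "card (vesztergombi_pos a b r) = card (callan_first a b r)"
proof (cases "r \<le> a")
  case True
  from r have "1 \<le> r" by simp
  then show ?thesis
  proof (induction r rule: dec_induct)
    case base
    have "card (vesztergombi_pos a b 1) = card (vesztergombi (a - 1) b)"
      using bij_betw_same_card[OF bij_betw_vesztergombi_delete_max[OF order_refl a, of b]]
      by (simp add: vesztergombi_pos_def add.commute)
    then show ?case using card_callan_first_first[OF a] total(1) by simp
  next
    case (step n)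
    then show ?case
      using card_vesztergombi_pos_low[of n a b] card_callan_first_low[of n a b] low[of n] True by simp
  qed
next
  case False
  from r have "r \<le> a + b" by simp
  then show ?thesis
  proof (induction r rule: inc_induct)
    case base
    show ?case using bij_betw_same_card[OF bij_betw_vesztergombi_pos_last[OF a b]]
      card_callan_first_last[OF a b] total(2) by simp
  next
    case (step n)
    then show ?case
      using card_vesztergombi_pos_high[of a n b] card_callan_first_high[of a n b] high[of n] False
      by simp
  qed
qed

lemma card_vesztergombi_eq_card_callan:
  "card (vesztergombi a b) = card (callan a b) \<and>
    (1 \<le> a \<longrightarrow> 1 \<le> b \<longrightarrow> (\<forall>r\<in>{1..a+b}. card (vesztergombi_pos a b r) = card (callan_first a b r)))"
proof (induction "a + b" arbitrary: a b rule: less_induct)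
  case less
  show ?case
  proof (cases "a = 0 \<or> b = 0")
    case True
    then show ?thesis using card_vesztergombi_degenerate by auto
  next
    case False
    then have a: "1 \<le> a" and b: "1 \<le> b" by auto
    have pos: "\<forall>r\<in>{1..a+b}. card (vesztergombi_pos a b r) = card (callan_first a b r)"
      using card_vesztergombi_pos_eq_card_callan_first_step[OF a b] less a b by simp
    have "card (vesztergombi a b) = (\<Sum>r\<in>{1..a+b}. card (callan_first a b r))"
      using card_vesztergombi_eq_sum_pos[OF a] pos by simp
    also have "\<dots> = card (callan a b)" using card_callan_eq_sum_first a by simp
    finally show ?thesis using pos by simp
  qed
qed

lemma card_vesztergombi_pos_eq_card_callan_first:
  "1 \<le> a \<Longrightarrow> 1 \<le> b \<Longrightarrow> r \<in> {1..a+b} \<Longrightarrow>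
    card (vesztergombi_pos a b r) = card (callan_first a b r)"
  using card_vesztergombi_eq_card_callan by blast

section \<open>A bubble-sorting network\<close>

definition compare_exchange :: "nat \<Rightarrow> (nat \<Rightarrow> nat) \<Rightarrow> nat \<Rightarrow> nat" where
  "compare_exchange k L = (if L (Suc k) < L k then L(k := L (Suc k), Suc k := L k) else L)"

text \<open>\<open>bubble_pass s q L\<close> applies compare-exchanges at positions \<open>s + q - 1\<close> down to \<open>s\<close>,
  carrying the minimum of \<open>L s, \<dots>, L (s + q)\<close> to position \<open>s\<close>; \<open>bubble_network p s j L\<close>
  performs \<open>j\<close> such passes of length \<open>p\<close>, starting at \<open>s, s + 1, \<dots>\<close>.\<close>

fun bubble_pass :: "nat \<Rightarrow> nat \<Rightarrow> (nat \<Rightarrow> nat) \<Rightarrow> nat \<Rightarrow> nat" where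
  "bubble_pass s 0 L = L"
| "bubble_pass s (Suc q) L = bubble_pass s q (compare_exchange (s + q) L)"

fun bubble_network :: "nat \<Rightarrow> nat \<Rightarrow> nat \<Rightarrow> (nat \<Rightarrow> nat) \<Rightarrow> nat \<Rightarrow> nat" where
  "bubble_network p s 0 L = L"
| "bubble_network p s (Suc j) L = bubble_network p (Suc s) j (bubble_pass s p L)"

lemma compare_exchange_lower: "compare_exchange k L k = min (L k) (L (Suc k))"
  by (simp add: compare_exchange_def)

lemma compare_exchange_upper: "compare_exchange k L (Suc k) = max (L k) (L (Suc k))"
  by (simp add: compare_exchange_def)

lemma compare_exchange_other: "j \<noteq> k \<Longrightarrow> j \<noteq> Suc k \<Longrightarrow> compare_exchange k L j = L j"
  by (simp add: compare_exchange_def)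

lemma compare_exchange_eq_comp_transpose:
  "compare_exchange k L = (if L (Suc k) < L k then L \<circ> transpose k (Suc k) else L)"
  by (auto simp: compare_exchange_def fun_eq_iff transpose_def)

lemma Min_compare_exchange:
  assumes "j \<le> k"
  shows "Min (compare_exchange k L ` {j..k}) = Min (L ` {j..Suc k})"
proof -
  have "L ` {j..Suc k} = compare_exchange k L ` {j..Suc k}"
    using assms image_comp[of L "transpose k (Suc k)" "{j..Suc k}"]
    by (simp add: compare_exchange_eq_comp_transpose)
  also have "\<dots> = insert (compare_exchange k L (Suc k)) (compare_exchange k L ` {j..k})"
    using assms by (auto simp: atLeastAtMostSuc_conv)
  finally have "Min (L ` {j..Suc k}) =
      min (compare_exchange k L (Suc k)) (Min (compare_exchange k L ` {j..k}))"
    using assms by (simp add: Min_insert)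
  moreover have "Min (compare_exchange k L ` {j..k}) \<le> compare_exchange k L k"
    using assms by (intro Min_le) auto
  ultimately show ?thesis by (auto simp: compare_exchange_lower compare_exchange_upper min_def max_def)
qed

lemma bubble_pass_eq:
  "bubble_pass s q L k =
    (if k < s \<or> s + q < k then L k
     else if k = s then Min (L ` {s..s+q})
     else max (L (k - 1)) (Min (L ` {k..s+q})))"
proof (induction q arbitrary: L)
  case (Suc q)
  let ?L = "compare_exchange (s + q) L"
  consider "k < s \<or> s + Suc q < k" | "k = Suc (s + q)" | "s \<le> k" "k \<le> s + q" by linarith
  then show ?case
  proof cases
    case 1
    then show ?thesis using Suc by (auto simp: compare_exchange_other)
  next
    case 2
    then show ?thesis using Suc by (simp add: compare_exchange_upper)
  next
    case 3
    then have "Min (?L ` {k..s+q}) = Min (L ` {k..s + Suc q})" by (simp add: Min_compare_exchange)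
    moreover have "?L (k - 1) = L (k - 1)" if "k \<noteq> s" using that 3 by (simp add: compare_exchange_other)
    ultimately show ?thesis using Suc 3 by auto
  qed
qed (cases "k = s"; simp)

lemma bij_betw_compare_exchange:
  assumes "bij_betw L {0..n} A" "Suc k \<le> n"
  shows "bij_betw (compare_exchange k L) {0..n} A"
proof -
  have "bij_betw (transpose k (Suc k)) {0..n} {0..n}"
    using assms(2) by (intro permutes_imp_bij permutes_swap_id) auto
  then show ?thesis
    using bij_betw_trans assms(1) by (auto simp: compare_exchange_eq_comp_transpose)
qed

lemma bij_betw_bubble_pass:
  "bij_betw L {0..n} A \<Longrightarrow> s + q \<le> n \<Longrightarrow> bij_betw (bubble_pass s q L) {0..n} A"
  by (induction q arbitrary: L) (auto simp: bij_betw_compare_exchange)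

lemma bij_betw_bubble_network:
  "bij_betw L {0..n} A \<Longrightarrow> s + j + p \<le> n + 1 \<Longrightarrow> bij_betw (bubble_network p s j L) {0..n} A"
  by (induction j arbitrary: s L) (auto simp: bij_betw_bubble_pass)

text \<open>After \<open>s\<close> passes the first \<open>s\<close> entries are in place and the others lie in a window
  that shrinks with \<open>s\<close>: for \<open>s = 0\<close> it is the Vesztergombi condition, and for
  \<open>s = n + 1 - p\<close> it forces the remaining entries into place.\<close>

definition bubble_invariant :: "nat \<Rightarrow> nat \<Rightarrow> nat \<Rightarrow> (nat \<Rightarrow> nat) \<Rightarrow> bool" where
  "bubble_invariant n p s L \<longleftrightarrow> (\<forall>k<s. L k = Suc k) \<and>
     (\<forall>k. s \<le> k \<and> k \<le> n \<longrightarrow> Suc k \<le> L k + p \<and> L k + s + p \<le> n + k + 2)"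

lemma sorted_prefix_below:
  assumes L: "bij_betw L {0..n} {1..Suc n}" and pre: "\<forall>j<s. L j = Suc j" and k: "s \<le> k" "k \<le> n"
  shows "Suc s \<le> L k"
proof (rule ccontr)
  assume "\<not> Suc s \<le> L k"
  moreover have "1 \<le> L k" using bij_betw_apply[OF L] k by fastforce
  ultimately have "L (L k - 1) = L k" using pre by simp
  then have "L k - 1 = k" using L k \<open>\<not> Suc s \<le> L k\<close> by (simp add: bij_betw_def inj_on_def)
  then show False using k \<open>\<not> Suc s \<le> L k\<close> \<open>1 \<le> L k\<close> by simp
qed

text \<open>The values \<open>s + 1, \<dots>, c - 1\<close> below the minimum \<open>c\<close> of the window \<open>k..s+p\<close> all sit at
  positions in \<open>s..k-1\<close> or \<open>s+p+1..n\<close>; counting them bounds \<open>c\<close>.\<close>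

lemma Min_window_bound:
  assumes L: "bij_betw L {0..n} {1..Suc n}" and pre: "\<forall>j<s. L j = Suc j"
    and k: "s \<le> k" "k \<le> s + p" and sp: "s + p \<le> n"
  shows "Min (L ` {k..s+p}) + s + p \<le> n + k + 1"
proof -
  let ?c = "Min (L ` {k..s+p})"
  have "?c \<in> L ` {k..s+p}" using k by (intro Min_in) auto
  then have "?c \<le> Suc n" using bij_betw_apply[OF L] sp by auto
  have sub: "{Suc s..<?c} \<subseteq> L ` ({s..<k} \<union> {Suc (s+p)..n})"
  proof
    fix v assume v: "v \<in> {Suc s..<?c}"
    then have "v \<in> L ` {0..n}"
      using \<open>?c \<le> Suc n\<close> bij_betw_imp_surj_on[OF L] by auto
    then obtain j where j: "j \<le> n" "L j = v" by auto
    have "s \<le> j" using pre[rule_format, of j] v j by (cases "j < s") auto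
    moreover have "\<not> (k \<le> j \<and> j \<le> s + p)"
    proof
      assume "k \<le> j \<and> j \<le> s + p"
      then have "?c \<le> L j" by (intro Min_le) auto
      then show False using v j by simp
    qed
    ultimately show "v \<in> L ` ({s..<k} \<union> {Suc (s+p)..n})" using j by force
  qed
  then have "card {Suc s..<?c} \<le> card ({s..<k} \<union> {Suc (s+p)..n})"
    using card_mono[OF _ sub] card_image_le[of "{s..<k} \<union> {Suc (s+p)..n}" L] by simp
  also have "\<dots> \<le> card {s..<k} + card {Suc (s+p)..n}" by (rule card_Un_le)
  finally show ?thesis using k sp by simp
qed

lemma bubble_invariant_pass:
  assumes L: "bij_betw L {0..n} {1..Suc n}" and sp: "s + p \<le> n"
    and inv: "bubble_invariant n p s L"
  shows "bubble_invariant n p (Suc s) (bubble_pass s p L)"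
proof -
  let ?B = "bubble_pass s p L"
  have pre: "\<forall>j<s. L j = Suc j"
    and win: "\<And>k. s \<le> k \<Longrightarrow> k \<le> n \<Longrightarrow> Suc k \<le> L k + p \<and> L k + s + p \<le> n + k + 2"
    using inv by (auto simp: bubble_invariant_def)
  have above: "\<And>k. s \<le> k \<Longrightarrow> k \<le> n \<Longrightarrow> Suc s \<le> L k" using sorted_prefix_below[OF L pre] .
  have "Min (L ` {s..s+p}) = Suc s"
  proof (rule antisym)
    have "Suc s \<in> L ` {0..n}" using bij_betw_imp_surj_on[OF L] sp by auto
    then obtain j where j: "j \<le> n" "L j = Suc s" by auto
    have "s \<le> j" using pre[rule_format, of j] j by (cases "j < s") auto
    with j win[of j] have "j \<in> {s..s+p}" by simp
    then have "Suc s \<in> L ` {s..s+p}" using imageI[of j _ L] j by simp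
    then show "Min (L ` {s..s+p}) \<le> Suc s" by (intro Min_le) auto
    show "Suc s \<le> Min (L ` {s..s+p})" using above sp by (subst Min_ge_iff) auto
  qed
  then have "\<forall>k<Suc s. ?B k = Suc k" using pre by (simp add: bubble_pass_eq less_Suc_eq)
  moreover have "Suc k \<le> ?B k + p \<and> ?B k + Suc s + p \<le> n + k + 2" if k: "Suc s \<le> k" "k \<le> n" for k
  proof (cases "s + p < k")
    case True
    then show ?thesis using win[of k] k bij_betw_apply[OF L, of k] by (simp add: bubble_pass_eq)
  next
    case False
    define m where "m = Min (L ` {k..s+p})"
    have "m + s + p \<le> n + k + 1" using Min_window_bound[OF L pre] k False sp by (simp add: m_def)
    moreover have "Suc s \<le> L (k - 1)" "L (k - 1) + s + p \<le> n + k + 1"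
      using above[of "k - 1"] win[of "k - 1"] k by auto
    moreover have "?B k = max (L (k - 1)) m" using False k by (simp add: bubble_pass_eq m_def)
    ultimately show ?thesis using False k by (simp add: max_def)
  qed
  ultimately show ?thesis by (simp add: bubble_invariant_def)
qed

lemma bubble_invariant_pass_rev:
  assumes L: "bij_betw L {0..n} {1..Suc n}" and sp: "s + p \<le> n"
    and inv: "bubble_invariant n p (Suc s) (bubble_pass s p L)"
  shows "bubble_invariant n p s L"
proof -
  let ?B = "bubble_pass s p L"
  have pre: "\<forall>j<s. L j = Suc j"
  proof (intro allI impI)
    fix j assume "j < s"
    moreover have "?B j = L j" using \<open>j < s\<close> by (simp add: bubble_pass_eq)
    ultimately show "L j = Suc j" using inv by (simp add: bubble_invariant_def)
  qed
  have win: "\<And>k. Suc s \<le> k \<Longrightarrow> k \<le> n \<Longrightarrow> Suc k \<le> ?B k + p \<and> ?B k + Suc s + p \<le> n + k + 2"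
    using inv by (auto simp: bubble_invariant_def)
  have "Suc k \<le> L k + p \<and> L k + s + p \<le> n + k + 2" if k: "s \<le> k" "k \<le> n" for k
  proof -
    consider "s + p < k" | "k = s + p" | "k < s + p" by linarith
    then show ?thesis
    proof cases
      case 1
      then show ?thesis using win[of k] k by (simp add: bubble_pass_eq)
    next
      case 2
      then show ?thesis using sorted_prefix_below[OF L pre k] bij_betw_apply[OF L, of k] k by simp
    next
      case 3
      then have "L k \<le> ?B (Suc k)" using k by (simp add: bubble_pass_eq)
      then show ?thesis using 3 k sorted_prefix_below[OF L pre k] win[of "Suc k"] sp by simp
    qed
  qed
  then show ?thesis using pre by (simp add: bubble_invariant_def)
qed

lemma bubble_invariant_network:
  assumes "bij_betw L {0..n} {1..Suc n}" "s + j + p \<le> n + 1"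
  shows "bubble_invariant n p s L \<longleftrightarrow> bubble_invariant n p (s + j) (bubble_network p s j L)"
  using assms
proof (induction j arbitrary: s L)
  case (Suc j)
  then have sp: "s + p \<le> n" by simp
  have "bubble_invariant n p s L \<longleftrightarrow> bubble_invariant n p (Suc s) (bubble_pass s p L)"
    using bubble_invariant_pass[OF Suc.prems(1) sp] bubble_invariant_pass_rev[OF Suc.prems(1) sp]
    by blast
  also have "\<dots> \<longleftrightarrow> bubble_invariant n p (s + Suc j) (bubble_network p s (Suc j) L)"
    using Suc.IH[OF bij_betw_bubble_pass[OF Suc.prems(1) sp], of "Suc s"] Suc.prems(2) by simp
  finally show ?case .
qed simp

lemma bij_betw_eq_Suc_if_le:
  assumes L: "bij_betw L {0..n} {1..Suc n}" and le: "\<And>k. k \<le> n \<Longrightarrow> L k \<le> Suc k" and k: "k \<le> n"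
  shows "L k = Suc k"
proof (rule ccontr)
  assume "L k \<noteq> Suc k"
  then have "sum L {0..n} < sum Suc {0..n}"
    using le k le_neq_trans[OF le[OF k]] by (intro sum_strict_mono_ex1) auto
  moreover have "sum L {0..n} = sum id {1..Suc n}"
    using sum.reindex_bij_betw[OF L, of id] by simp
  moreover have "sum Suc {0..n} = sum id {1..Suc n}"
    using sum.shift_bounds_cl_Suc_ivl[of id 0 n] by simp
  ultimately show False by simp
qed

lemma bubble_invariant_final:
  assumes L: "bij_betw L {0..n} {1..Suc n}" and p: "p \<le> n"
  shows "bubble_invariant n p (n + 1 - p) L \<longleftrightarrow> (\<forall>k\<le>n. L k = Suc k)"
proof
  assume "bubble_invariant n p (n + 1 - p) L"
  then have "L k \<le> Suc k" if "k \<le> n" for k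
    using that p by (cases "k < n + 1 - p") (auto simp: bubble_invariant_def)
  then show "\<forall>k\<le>n. L k = Suc k" using bij_betw_eq_Suc_if_le[OF L] by blast
qed (use p in \<open>auto simp: bubble_invariant_def\<close>)

theorem bubble_network_sorts_iff:
  assumes L: "bij_betw L {0..n} {1..Suc n}" and p: "p \<le> n"
  shows "(\<forall>k\<le>n. bubble_network p 0 (n + 1 - p) L k = Suc k) \<longleftrightarrow>
    (\<forall>k\<le>n. Suc k \<le> L k + p \<and> L k + p \<le> n + k + 2)"
proof -
  have "bubble_invariant n p 0 L \<longleftrightarrow> bubble_invariant n p (n + 1 - p) (bubble_network p 0 (n + 1 - p) L)"
    using bubble_invariant_network[OF L, of 0 "n + 1 - p"] p by simp
  also have "\<dots> \<longleftrightarrow> (\<forall>k\<le>n. bubble_network p 0 (n + 1 - p) L k = Suc k)"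
    using bubble_invariant_final[OF bij_betw_bubble_network[OF L] p] p by simp
  finally show ?thesis by (simp add: bubble_invariant_def)
qed

section \<open>Toppling\<close>

definition topple :: "config \<Rightarrow> int \<Rightarrow> nat \<Rightarrow> nat \<Rightarrow> config" where
  "topple c i \<alpha> \<beta> = (\<lambda>j. if j = i then c i - {\<alpha>, \<beta>}
     else if j = i - 1 then c j \<union> {\<alpha>}
     else if j = i + 1 then c j \<union> {\<beta>}
     else c j)"

lemma topple_step_iff:
  "topple_step c c' \<longleftrightarrow> (\<exists>i \<alpha> \<beta>. \<alpha> \<in> c i \<and> \<beta> \<in> c i \<and> \<alpha> < \<beta> \<and> c' = topple c i \<alpha> \<beta>)"
  unfolding topple_step_def topple_def by simp

lemma topple_other [simp]: "k \<noteq> i \<Longrightarrow> k \<noteq> i - 1 \<Longrightarrow> k \<noteq> i + 1 \<Longrightarrow> topple c i \<alpha> \<beta> k = c k"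
  by (simp add: topple_def)

lemma stable_no_topple_step: "stable c \<Longrightarrow> \<not> topple_step c d"
proof
  assume "stable c" "topple_step c d"
  then obtain i \<alpha> \<beta> where "\<alpha> \<in> c i" "\<beta> \<in> c i" "\<alpha> < \<beta>" "finite (c i)" "card (c i) \<le> 1"
    by (auto simp: topple_step_iff stable_def)
  then show False using card_mono[of "c i" "{\<alpha>, \<beta>}"] by simp
qed

definition chips :: "nat \<Rightarrow> (nat \<Rightarrow> nat) \<Rightarrow> (nat \<Rightarrow> int) \<Rightarrow> config" where
  "chips n L P = (\<lambda>i. {L k |k. k \<le> n \<and> P k = i})"

lemma topple_step_chips:
  assumes ab: "a \<le> n" "b \<le> n" "a \<noteq> b" "P a = i" "P b = i" "L a \<noteq> L b"
    and others: "\<And>k. k \<le> n \<Longrightarrow> k \<noteq> a \<Longrightarrow> k \<noteq> b \<Longrightarrow> P k \<noteq> i \<and> P' k = P k \<and> L' k = L k"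
    and moved: "P' a = i - 1" "P' b = i + 1" "L' a = min (L a) (L b)" "L' b = max (L a) (L b)"
  shows "topple_step (chips n L P) (chips n L' P')"
proof -
  let ?\<alpha> = "min (L a) (L b)" and ?\<beta> = "max (L a) (L b)"
  have "x \<in> chips n L' P' j \<longleftrightarrow> x \<in> topple (chips n L P) i ?\<alpha> ?\<beta> j" for j x
  proof
    assume "x \<in> chips n L' P' j"
    then obtain k where k: "k \<le> n" "P' k = j" "L' k = x" by (auto simp: chips_def)
    then show "x \<in> topple (chips n L P) i ?\<alpha> ?\<beta> j"
      using ab others[of k] moved by (cases "k = a \<or> k = b") (auto simp: chips_def topple_def)
  next
    assume x: "x \<in> topple (chips n L P) i ?\<alpha> ?\<beta> j"
    show "x \<in> chips n L' P' j"
    proof (cases "(j = i - 1 \<and> x = ?\<alpha>) \<or> (j = i + 1 \<and> x = ?\<beta>)")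
      case True
      then show ?thesis
      proof
        assume "j = i - 1 \<and> x = ?\<alpha>"
        then show ?thesis using ab(1) moved unfolding chips_def by (auto intro!: exI[of _ a])
      next
        assume "j = i + 1 \<and> x = ?\<beta>"
        then show ?thesis using ab(2) moved unfolding chips_def by (auto intro!: exI[of _ b])
      qed
    next
      case False
      then have "x \<in> chips n L P j" "j = i \<longrightarrow> x \<noteq> L a \<and> x \<noteq> L b"
        using x by (auto simp: topple_def min_def max_def split: if_splits)
      then obtain k where k: "k \<le> n" "P k = j" "L k = x" "k \<noteq> a" "k \<noteq> b"
        using ab by (auto simp: chips_def)
      then show ?thesis using others[of k] unfolding chips_def by (auto intro!: exI[of _ k])
    qed
  qed
  moreover have "?\<alpha> \<in> chips n L P i" "?\<beta> \<in> chips n L P i" "?\<alpha> < ?\<beta>"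
    using ab by (auto simp: chips_def min_def max_def)
  ultimately show ?thesis unfolding topple_step_iff by blast
qed

definition separated_doubles :: "config \<Rightarrow> bool" where
  "separated_doubles c \<longleftrightarrow> (\<forall>i. finite (c i) \<and> card (c i) \<le> 2) \<and>
     (\<forall>i j. i < j \<and> card (c i) = 2 \<and> card (c j) = 2 \<longrightarrow> (\<exists>k. i < k \<and> k < j \<and> c k = {}))"

lemma separated_doubles_toppled_site:
  assumes sep: "separated_doubles c" and ab: "\<alpha> \<in> c i" "\<beta> \<in> c i" "\<alpha> < \<beta>"
  shows "c i = {\<alpha>, \<beta>}" "card (c (i - 1)) \<le> 1" "card (c (i + 1)) \<le> 1"
proof -
  have fin: "finite (c j)" "card (c j) \<le> 2" for j using sep by (auto simp: separated_doubles_def)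
  have "{\<alpha>, \<beta>} \<subseteq> c i" "card {\<alpha>, \<beta>} = 2" using ab by auto
  then show ci: "c i = {\<alpha>, \<beta>}" using fin[of i] by (metis card_mono card_subset_eq le_antisym)
  have btw: "\<exists>k. x < k \<and> k < y \<and> c k = {}" if "x < y" "card (c x) = 2" "card (c y) = 2" for x y
    using sep that unfolding separated_doubles_def by blast
  have "card (c i) = 2" using ci ab(3) by simp
  then have "card (c (i - 1)) \<noteq> 2" "card (c (i + 1)) \<noteq> 2"
    using btw[of "i - 1" i] btw[of i "i + 1"] by force+
  then show "card (c (i - 1)) \<le> 1" "card (c (i + 1)) \<le> 1"
    using fin(2)[of "i - 1"] fin(2)[of "i + 1"] by linarith+
qed

lemma separated_doubles_topple_sites:
  assumes sep: "separated_doubles c" and ab: "\<alpha> \<in> c i" "\<beta> \<in> c i" "\<alpha> < \<beta>"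
  shows "finite (topple c i \<alpha> \<beta> j) \<and> card (topple c i \<alpha> \<beta> j) \<le> 2"
    and "card (topple c i \<alpha> \<beta> z) = 2 \<Longrightarrow> z \<noteq> i \<and> (card (c z) = 2 \<or> (z \<in> {i - 1, i + 1} \<and> c z \<noteq> {}))"
proof -
  note site = separated_doubles_toppled_site[OF sep ab]
  have fin: "finite (c j)" "card (c j) \<le> 2" for j using sep by (auto simp: separated_doubles_def)
  have add: "card (c j \<union> {x}) \<le> card (c j) + 1" for j x
    using card_Un_le[of "c j" "{x}"] by simp
  have "i - 1 \<noteq> i + 1" by simp
  then show "finite (topple c i \<alpha> \<beta> j) \<and> card (topple c i \<alpha> \<beta> j) \<le> 2"
    using fin site add[of "i - 1" \<alpha>] add[of "i + 1" \<beta>] by (auto simp: topple_def)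
  assume z: "card (topple c i \<alpha> \<beta> z) = 2"
  consider "z = i" | "z = i - 1" | "z = i + 1" | "z \<noteq> i" "z \<noteq> i - 1" "z \<noteq> i + 1" by blast
  then show "z \<noteq> i \<and> (card (c z) = 2 \<or> (z \<in> {i - 1, i + 1} \<and> c z \<noteq> {}))"
    by cases (use z site(1) in \<open>auto simp: topple_def\<close>)
qed

lemma separated_doubles_topple:
  assumes sep: "separated_doubles c" and ab: "\<alpha> \<in> c i" "\<beta> \<in> c i" "\<alpha> < \<beta>"
  shows "separated_doubles (topple c i \<alpha> \<beta>)"
proof -
  let ?c = "topple c i \<alpha> \<beta>"
  note sites = separated_doubles_topple_sites[OF sep ab]
  have btw: "\<exists>k. x < k \<and> k < y \<and> c k = {}" if "x < y" "card (c x) = 2" "card (c y) = 2" for x y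
    using sep that unfolding separated_doubles_def by blast
  have ci: "card (c i) = 2" using separated_doubles_toppled_site(1)[OF sep ab] ab(3) by simp
  have "\<exists>k. x < k \<and> k < y \<and> ?c k = {}" if xy: "x < y" "card (?c x) = 2" "card (?c y) = 2" for x y
  proof -
    consider "x < i" "i < y" | "y < i" | "i < x"
      using sites(2)[OF xy(2)] sites(2)[OF xy(3)] xy(1) by linarith
    then show ?thesis
    proof cases
      case 1
      have "?c i = {}" using separated_doubles_toppled_site(1)[OF sep ab] by (simp add: topple_def)
      then show ?thesis using 1 by blast
    next
      case 2
      define y' where "y' = (if card (c y) = 2 then y else i)"
      have "card (c x) = 2" using sites(2)[OF xy(2)] xy(1) 2 by auto
      moreover have "card (c y') = 2" "x < y'" using ci xy(1) 2 by (auto simp: y'_def)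
      ultimately obtain k where k: "x < k" "k < y'" "c k = {}" using btw by blast
      have "y' = y \<or> (y = i - 1 \<and> y' = i \<and> c y \<noteq> {})" using sites(2)[OF xy(3)] 2 by (auto simp: y'_def)
      then have "k < y" using k by (cases "k = y") auto
      then show ?thesis using k 2 by (intro exI[of _ k]) simp
    next
      case 3
      define x' where "x' = (if card (c x) = 2 then x else i)"
      have "card (c y) = 2" using sites(2)[OF xy(3)] xy(1) 3 by auto
      moreover have "card (c x') = 2" "x' < y" using ci xy(1) 3 by (auto simp: x'_def)
      ultimately obtain k where k: "x' < k" "k < y" "c k = {}" using btw by blast
      have "x' = x \<or> (x = i + 1 \<and> x' = i \<and> c x \<noteq> {})" using sites(2)[OF xy(2)] 3 by (auto simp: x'_def)
      then have "x < k" using k by (cases "k = x") auto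
      then show ?thesis using k 3 by (intro exI[of _ k]) simp
    qed
  qed
  then show ?thesis using sites(1) by (auto simp: separated_doubles_def)
qed

lemma separated_doubles_topple_step:
  "separated_doubles c \<Longrightarrow> topple_step c d \<Longrightarrow> separated_doubles d"
  by (auto simp: topple_step_iff intro: separated_doubles_topple)

text \<open>Two double sites of a separated configuration are at distance at least two, so
  toppling one of them does not affect the other and the two topplings commute.\<close>

lemma topple_step_diamond:
  assumes sep: "separated_doubles c" and "topple_step c c1" "topple_step c c2"
  shows "c1 = c2 \<or> (\<exists>d. topple_step c1 d \<and> topple_step c2 d)"
proof -
  obtain i \<alpha> \<beta> where ab: "\<alpha> \<in> c i" "\<beta> \<in> c i" "\<alpha> < \<beta>" and c1: "c1 = topple c i \<alpha> \<beta>"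
    using assms(2) by (auto simp: topple_step_iff)
  obtain j \<gamma> \<delta> where gd: "\<gamma> \<in> c j" "\<delta> \<in> c j" "\<gamma> < \<delta>" and c2: "c2 = topple c j \<gamma> \<delta>"
    using assms(3) by (auto simp: topple_step_iff)
  have ci: "c i = {\<alpha>, \<beta>}" and cj: "c j = {\<gamma>, \<delta>}"
    using separated_doubles_toppled_site(1) sep ab gd by blast+
  show ?thesis
  proof (cases "i = j")
    case True
    then show ?thesis using ci cj ab(3) gd(3) c1 c2 by (auto simp: doubleton_eq_iff)
  next
    case False
    have btw: "\<exists>k. x < k \<and> k < y" if "x < y" "card (c x) = 2" "card (c y) = 2" for x y
      using sep that unfolding separated_doubles_def by blast
    have "card (c i) = 2" "card (c j) = 2" using ci cj ab(3) gd(3) by auto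
    then have far: "i + 1 < j \<or> j + 1 < i"
      using btw[of i j] btw[of j i] False by (cases "i < j") auto
    then have "c1 j = c j" "c2 i = c i" using c1 c2 by (auto simp: topple_def)
    then have "topple_step c1 (topple c1 j \<gamma> \<delta>)" "topple_step c2 (topple c2 i \<alpha> \<beta>)"
      unfolding topple_step_iff using ab gd by blast+
    moreover have "topple c1 j \<gamma> \<delta> = topple c2 i \<alpha> \<beta>"
      using far unfolding c1 c2 topple_def by (auto simp: fun_eq_iff insert_commute)
    ultimately show ?thesis by auto
  qed
qed

lemma separated_doubles_unique_stable:
  assumes sep: "separated_doubles c" and x: "topple_step\<^sup>*\<^sup>* c x" "stable x"
    and y: "topple_step\<^sup>*\<^sup>* c y" "stable y"
  shows "x = y"
proof -
  define R where "R c d \<longleftrightarrow> separated_doubles c \<and> topple_step c d" for c d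
  have R_steps: "R\<^sup>*\<^sup>* c d" if "topple_step\<^sup>*\<^sup>* c d" "separated_doubles c" for c d
    using that
  proof (induction rule: converse_rtranclp_induct)
    case (step c c')
    have "R c c'" using step.hyps(1) step.prems by (simp add: R_def)
    moreover have "R\<^sup>*\<^sup>* c' d"
      using step.IH separated_doubles_topple_step[OF step.prems step.hyps(1)] .
    ultimately show ?case by (rule converse_rtranclp_into_rtranclp)
  qed simp
  have "strong_confluentp R"
  proof
    fix c c1 c2 assume R: "R c c1" "R c c2"
    then have sep12: "separated_doubles c1" "separated_doubles c2"
      using separated_doubles_topple_step by (auto simp: R_def)
    from R have "separated_doubles c" "topple_step c c1" "topple_step c c2" by (simp_all add: R_def)
    then have "c1 = c2 \<or> (\<exists>d. topple_step c1 d \<and> topple_step c2 d)" by (rule topple_step_diamond)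
    then show "\<exists>d. R\<^sup>*\<^sup>* c1 d \<and> R\<^sup>=\<^sup>= c2 d"
    proof
      assume "\<exists>d. topple_step c1 d \<and> topple_step c2 d"
      then obtain d where "R c1 d" "R c2 d" using sep12 by (auto simp: R_def)
      then show ?thesis by auto
    qed auto
  qed
  then obtain u where u: "R\<^sup>*\<^sup>* x u" "R\<^sup>*\<^sup>* y u"
    using confluentpD[OF strong_confluentp_imp_confluentp R_steps[OF x(1) sep] R_steps[OF y(1) sep]]
    by blast
  have "\<not> R x d" "\<not> R y d" for d using stable_no_topple_step x y by (auto simp: R_def)
  then have "x = u" "y = u" using u by (auto elim: converse_rtranclpE)
  then show ?thesis by simp
qed

section \<open>Toppling as a sorting network\<close>

text \<open>While the pass starting at \<open>s\<close> has \<open>q\<close> compare-exchanges left, the chip \<open>L k\<close> sits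
  at site \<open>stage_site p s q k\<close>: the chips already in place (\<open>k < s\<close>) at site \<open>k\<close>, those of
  the window \<open>s..s+p\<close> one site to the right, except \<open>L (s + q)\<close>, which shares site
  \<open>s + q\<close> with \<open>L (s + q - 1)\<close>, and the chips beyond the window at site \<open>k\<close>.\<close>

definition stage_site :: "nat \<Rightarrow> nat \<Rightarrow> nat \<Rightarrow> nat \<Rightarrow> int" where
  "stage_site p s q k = (if k < s then int k
     else int k + 1 - (if k = s + q then 1 else 0) - (if s + p < k then 1 else 0))"

lemma stage_site_next_pass: "stage_site p s 0 = stage_site p (Suc s) p"
  by (auto simp: fun_eq_iff stage_site_def)

lemma topple_step_compare_exchange:
  assumes L: "bij_betw L {0..n} {1..Suc n}" and q: "q < p" and sp: "s + p \<le> n"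
  shows "topple_step (chips n L (stage_site p s (Suc q)))
    (chips n (compare_exchange (s + q) L) (stage_site p s q))"
proof (rule topple_step_chips[where a = "s + q" and b = "Suc (s + q)" and i = "int (Suc (s + q))"])
  show "L (s + q) \<noteq> L (Suc (s + q))"
    using L q sp inj_on_eq_iff[OF bij_betw_imp_inj_on[OF L], of "s + q" "Suc (s + q)"] by simp
qed (use q sp in \<open>auto simp: stage_site_def compare_exchange_lower compare_exchange_upper
  compare_exchange_other\<close>)

lemma topple_steps_bubble_pass:
  assumes L: "bij_betw L {0..n} {1..Suc n}" and q: "q \<le> p" and sp: "s + p \<le> n"
  shows "topple_step\<^sup>*\<^sup>* (chips n L (stage_site p s q))
    (chips n (bubble_pass s q L) (stage_site p s 0))"
  using L q
proof (induction q arbitrary: L)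
  case (Suc q)
  have "bij_betw (compare_exchange (s + q) L) {0..n} {1..Suc n}"
    using Suc.prems sp by (intro bij_betw_compare_exchange) auto
  then have "topple_step\<^sup>*\<^sup>* (chips n (compare_exchange (s + q) L) (stage_site p s q))
      (chips n (bubble_pass s (Suc q) L) (stage_site p s 0))"
    using Suc by simp
  with topple_step_compare_exchange[OF Suc.prems(1) _ sp, of q] Suc.prems(2) show ?case
    by (simp add: converse_rtranclp_into_rtranclp)
qed simp

lemma topple_steps_bubble_network:
  assumes L: "bij_betw L {0..n} {1..Suc n}" and sj: "s + j + p \<le> n + 1"
  shows "topple_step\<^sup>*\<^sup>* (chips n L (stage_site p s p))
    (chips n (bubble_network p s j L) (stage_site p (s + j) p))"
  using L sj
proof (induction j arbitrary: s L)
  case (Suc j)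
  then have sp: "s + p \<le> n" by simp
  have "topple_step\<^sup>*\<^sup>* (chips n L (stage_site p s p))
      (chips n (bubble_pass s p L) (stage_site p (Suc s) p))"
    using topple_steps_bubble_pass[OF Suc.prems(1) order_refl sp] unfolding stage_site_next_pass .
  moreover have "topple_step\<^sup>*\<^sup>* (chips n (bubble_pass s p L) (stage_site p (Suc s) p))
      (chips n (bubble_network p (Suc s) j (bubble_pass s p L)) (stage_site p (Suc s + j) p))"
    by (rule Suc.IH[OF bij_betw_bubble_pass[OF Suc.prems(1) sp]]) (use Suc.prems(2) in simp)
  ultimately show ?case by simp
qed simp

lemma chips_final_stage:
  assumes "p \<le> n"
  shows "chips n L (stage_site p (n + 1 - p) p) (int j) =
    (if j < n + 1 - p then {L j} else if j = n + 1 - p \<or> n + 1 < j then {} else {L (j - 1)})"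
proof -
  have "stage_site p (n + 1 - p) p k = int j \<longleftrightarrow> j = (if k < n + 1 - p then k else Suc k)"
    if "k \<le> n" for k
    using that assms by (auto simp: stage_site_def)
  then have "chips n L (stage_site p (n + 1 - p) p) (int j) =
      L ` {k. k \<le> n \<and> j = (if k < n + 1 - p then k else Suc k)}"
    by (auto simp: chips_def)
  also have "{k. k \<le> n \<and> j = (if k < n + 1 - p then k else Suc k)} =
      (if j < n + 1 - p then {j} else if j = n + 1 - p \<or> n + 1 < j then {} else {j - 1})"
    using assms by auto
  finally show ?thesis by simp
qed

lemma stable_final_stage:
  assumes "p \<le> n"
  shows "stable (chips n L (stage_site p (n + 1 - p) p))"
  unfolding stable_def
proof
  fix i :: int
  show "card (chips n L (stage_site p (n + 1 - p) p) i) \<le> 1 \<and>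
      finite (chips n L (stage_site p (n + 1 - p) p) i)"
  proof (cases "i < 0")
    case True
    then show ?thesis by (auto simp: chips_def stage_site_def)
  next
    case False
    then obtain j where "i = int j" by (metis nonneg_eq_int not_less)
    then show ?thesis using chips_final_stage[OF assms, of L j] by auto
  qed
qed

lemma upto_int_eq_map_upt: "[0..int m] = map int [0..<Suc m]"
  by (rule nth_equalityI) (auto simp del: upt_Suc)

lemma concat_map_skip_hole:
  "h \<le> m \<Longrightarrow>
    concat (map (\<lambda>j. if j < h then [f j] else if j = h then [] else [f (j - 1)]) [0..<Suc m]) =
    map f [0..<m]"
proof (induction m)
  case (Suc m)
  let ?F = "\<lambda>j. if j < h then [f j] else if j = h then [] else [f (j - 1)]"
  show ?case
  proof (cases "h \<le> m")
    case True
    then show ?thesis using Suc by simp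
  next
    case False
    then have h: "h = Suc m" using Suc.prems by simp
    have "concat (map ?F [0..<Suc (Suc m)]) = concat (map ?F [0..<Suc m])" using h by simp
    also have "\<dots> = concat (map (\<lambda>j. [f j]) [0..<Suc m])"
      using h by (intro arg_cong[where f = concat] map_cong) auto
    finally show ?thesis by (simp only: concat_map_singleton)
  qed
qed simp

lemma read_final_stage:
  assumes "p \<le> n"
  shows "read_config n (chips n L (stage_site p (n + 1 - p) p)) = map L [0..<Suc n]"
proof -
  let ?c = "chips n L (stage_site p (n + 1 - p) p)"
  have "[0..int n + 1] = map int [0..<Suc (Suc n)]"
    using upto_int_eq_map_upt[of "Suc n"] by (simp del: upt_Suc add: add.commute)
  then have "read_config n ?c = concat (map (\<lambda>j. sorted_list_of_set (?c (int j))) [0..<Suc (Suc n)])"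
    by (simp only: read_config_def map_map comp_def)
  also have "\<dots> = concat (map (\<lambda>j. if j < n + 1 - p then [L j] else if j = n + 1 - p then []
      else [L (j - 1)]) [0..<Suc (Suc n)])"
    using chips_final_stage[OF assms] by (intro arg_cong[where f = concat] map_cong) auto
  also have "\<dots> = map L [0..<Suc n]" using concat_map_skip_hole[of "n + 1 - p" "Suc n" L] by simp
  finally show ?thesis .
qed

lemma insert_config_eq_chips:
  assumes p: "1 \<le> p" "p \<le> n"
  shows "insert_config n \<pi> r p = chips n (\<lambda>k. perm_insert (Suc p) r \<pi> (Suc k)) (stage_site p 0 p)"
    (is "_ = chips n ?L _")
proof (intro ext set_eqI iffI)
  fix i x
  assume x: "x \<in> insert_config n \<pi> r p i"
  show "x \<in> chips n ?L (stage_site p 0 p) i"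
  proof (cases "i = int p \<and> x = r")
    case True
    then show ?thesis using p by (auto simp: chips_def stage_site_def intro!: exI[of _ p])
  next
    case False
    then have i: "1 \<le> i" "i \<le> int n" "x = skip r (\<pi> (nat i))"
      using x by (auto simp: insert_config_def skip_def split: if_splits)
    define j where "j = nat i"
    have j: "i = int j" "1 \<le> j" "j \<le> n" "x = skip r (\<pi> j)" using i by (auto simp: j_def)
    show ?thesis
    proof (cases "j \<le> p")
      case True
      then show ?thesis using j p unfolding chips_def
        by (auto simp: stage_site_def perm_insert_def unskip_def intro!: exI[of _ "j - 1"])
    next
      case False
      then show ?thesis using j p unfolding chips_def
        by (auto simp: stage_site_def perm_insert_def unskip_def intro!: exI[of _ j])
    qed
  qed
next
  fix i x
  assume "x \<in> chips n ?L (stage_site p 0 p) i"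
  then obtain k where k: "k \<le> n" "stage_site p 0 p k = i" "x = ?L k" by (auto simp: chips_def)
  have chip: "skip r (\<pi> j) \<in> insert_config n \<pi> r p (int j)" if "1 \<le> j" "j \<le> n" for j
    using that by (simp add: insert_config_def skip_def)
  consider "k < p" "i = int (Suc k)" "x = skip r (\<pi> (Suc k))" | "k = p" "i = int p" "x = r"
    | "p < k" "i = int k" "x = skip r (\<pi> k)"
    using k by (cases "k < p"; cases "k = p") (auto simp: stage_site_def perm_insert_def unskip_def)
  then show "x \<in> insert_config n \<pi> r p i"
  proof cases
    case 1
    then show ?thesis using chip[of "Suc k"] k p by simp
  next
    case 2
    then show ?thesis by (simp add: insert_config_def)
  next
    case 3
    then show ?thesis using chip[of k] k p by simp
  qed
qed

lemma separated_doubles_insert_config: "separated_doubles (insert_config n \<pi> r p)"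
proof -
  let ?c = "insert_config n \<pi> r p"
  have card: "finite (?c i) \<and> card (?c i) \<le> (if i = int p then 2 else 1)" for i
    using card_Un_le[of "{if \<pi> (nat i) < r then \<pi> (nat i) else \<pi> (nat i) + 1}" "{r}"]
    by (auto simp: insert_config_def)
  then have double: "card (?c i) = 2 \<Longrightarrow> i = int p" for i using card[of i] by (cases "i = int p") auto
  show ?thesis unfolding separated_doubles_def
  proof (intro conjI allI impI)
    show "finite (?c i)" "card (?c i) \<le> 2" for i using card[of i] by (auto split: if_splits)
    fix i j assume "i < j \<and> card (?c i) = 2 \<and> card (?c j) = 2"
    then show "\<exists>k. i < k \<and> k < j \<and> ?c k = {}" using double[of i] double[of j] by simp
  qed
qed

lemma bij_betw_shift_permutes:
  assumes "w permutes {1..Suc n}"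
  shows "bij_betw (\<lambda>k. w (Suc k)) {0..n} {1..Suc n}"
proof -
  have "bij_betw Suc {0..n} {1..Suc n}" by (simp add: image_Suc_atLeastAtMost)
  from bij_betw_trans[OF this permutes_imp_bij[OF assms]] show ?thesis by (simp add: comp_def)
qed

theorem toppleable_iff_bubble_network_sorts:
  assumes p: "1 \<le> p" "p \<le> n" and r: "1 \<le> r" "r \<le> n + 1" and \<pi>: "\<pi> permutes {1..n}"
  shows "toppleable n r p \<pi> \<longleftrightarrow>
    (\<forall>k\<le>n. bubble_network p 0 (n + 1 - p) (\<lambda>k. perm_insert (Suc p) r \<pi> (Suc k)) k = Suc k)"
proof -
  let ?sorted = "bubble_network p 0 (n + 1 - p) (\<lambda>k. perm_insert (Suc p) r \<pi> (Suc k))"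
  let ?final = "chips n ?sorted (stage_site p (n + 1 - p) p)"
  have "perm_insert (Suc p) r \<pi> permutes {1..Suc n}" using permutes_perm_insert[OF \<pi>] p r by simp
  from bij_betw_shift_permutes[OF this]
  have reach: "topple_step\<^sup>*\<^sup>* (insert_config n \<pi> r p) ?final"
    using topple_steps_bubble_network[of _ n 0 "n + 1 - p" p] insert_config_eq_chips[OF p] p by simp
  have "toppleable n r p \<pi> \<longleftrightarrow> read_config n ?final = [1..<n+2]"
  proof
    assume "toppleable n r p \<pi>"
    then obtain c where c: "topple_step\<^sup>*\<^sup>* (insert_config n \<pi> r p) c" "stable c"
      "read_config n c = [1..<n+2]" unfolding toppleable_def by blast
    have "c = ?final"
      by (rule separated_doubles_unique_stable[OF separated_doubles_insert_config c(1,2) reach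
        stable_final_stage[OF p(2)]])
    then show "read_config n ?final = [1..<n+2]" using c(3) by simp
  qed (use reach stable_final_stage[OF p(2)] in \<open>auto simp: toppleable_def\<close>)
  also have "\<dots> \<longleftrightarrow> map ?sorted [0..<Suc n] = map Suc [0..<Suc n]"
    by (simp only: read_final_stage[OF p(2)] map_Suc_upt) simp
  also have "\<dots> \<longleftrightarrow> (\<forall>k\<le>n. ?sorted k = Suc k)"
    by (simp only: map_eq_conv set_upt) (auto simp: less_Suc_eq_le)
  finally show ?thesis .
qed

theorem toppleable_iff_vesztergombi:
  assumes p: "1 \<le> p" "p \<le> n" and r: "1 \<le> r" "r \<le> n + 1" and \<pi>: "\<pi> permutes {1..n}"
  shows "toppleable n r p \<pi> \<longleftrightarrow> perm_insert (Suc p) r \<pi> \<in> vesztergombi p (n - p + 1)"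
proof -
  let ?w = "perm_insert (Suc p) r \<pi>"
  have w: "?w permutes {1..Suc n}" using permutes_perm_insert[OF \<pi>] p r by simp
  have "toppleable n r p \<pi> \<longleftrightarrow> (\<forall>k\<le>n. Suc k \<le> ?w (Suc k) + p \<and> ?w (Suc k) + p \<le> n + k + 2)"
    using toppleable_iff_bubble_network_sorts[OF p r \<pi>]
      bubble_network_sorts_iff[OF bij_betw_shift_permutes[OF w] p(2)] by simp
  also have "\<dots> \<longleftrightarrow> (\<forall>i\<in>Suc ` {0..n}. i \<le> ?w i + p \<and> ?w i \<le> i + (n - p + 1))"
  proof -
    have "?w (Suc k) + p \<le> n + k + 2 \<longleftrightarrow> ?w (Suc k) \<le> Suc k + (n - p + 1)" for k using p by auto
    then show ?thesis by (simp add: atLeast0AtMost, simp add: Ball_def)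
  qed
  also have "\<dots> \<longleftrightarrow> ?w \<in> vesztergombi p (n - p + 1)"
    using w p by (simp add: vesztergombi_iff image_Suc_atLeastAtMost)
  finally show ?thesis .
qed

lemma bij_betw_toppleable_vesztergombi:
  assumes p: "1 \<le> p" "p \<le> n" and r: "1 \<le> r" "r \<le> n + 1"
  shows "bij_betw (perm_insert (Suc p) r) (toppleable_perms n r p)
    {w \<in> vesztergombi p (n - p + 1). w (Suc p) = r}" (is "bij_betw _ ?T ?W")
proof (rule bij_betw_byWitness[where f' = "perm_delete (Suc p) r"])
  have W: "w permutes {1..Suc n}" "w (Suc p) = r" if "w \<in> ?W" for w
    using that p by (auto simp: vesztergombi_iff)
  show "\<forall>\<pi>\<in>?T. perm_delete (Suc p) r (perm_insert (Suc p) r \<pi>) = \<pi>" by simp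
  show "\<forall>w\<in>?W. perm_insert (Suc p) r (perm_delete (Suc p) r w) = w"
    using W perm_insert_delete by blast
  show "perm_insert (Suc p) r ` ?T \<subseteq> ?W"
    using toppleable_iff_vesztergombi[OF p r] by (auto simp: toppleable_perms_def)
  show "perm_delete (Suc p) r ` ?W \<subseteq> ?T"
  proof (rule image_subsetI)
    fix w assume w: "w \<in> ?W"
    then have "perm_delete (Suc p) r w permutes {1..n}"
      using permutes_perm_delete[OF W(1)] p by simp
    moreover have "perm_insert (Suc p) r (perm_delete (Suc p) r w) = w"
      using perm_insert_delete[OF W[OF w]] .
    ultimately show "perm_delete (Suc p) r w \<in> ?T"
      using toppleable_iff_vesztergombi[OF p r] w by (simp add: toppleable_perms_def)
  qed
qed

theorem proposition4p5:
  fixes n p r :: nat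
  assumes "1 \<le> n" and "1 \<le> p" and "p \<le> n" and "1 \<le> r" and "r \<le> n + 1"
  shows "(\<exists>f. bij_betw f (toppleable_perms n r p)
              {\<sigma> \<in> vesztergombi (n - p + 1) p. inv \<sigma> (p + 1) = r})
       \<and> (\<exists>g. bij_betw g (toppleable_perms n r p)
              {\<tau> \<in> callan (n - p + 1) p. \<tau> 1 = r})"
    (is "(\<exists>f. bij_betw f ?T ?V) \<and> (\<exists>g. bij_betw g _ ?C)")
proof
  have V: "bij_betw (inv \<circ> perm_insert (Suc p) r) ?T ?V"
    using bij_betw_trans[OF bij_betw_toppleable_vesztergombi bij_betw_inv_vesztergombi] assms by simp
  then show "\<exists>f. bij_betw f ?T ?V" by blast
  have "card ?T = card ?V" using V by (rule bij_betw_same_card)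
  also have "\<dots> = card ?C"
    using card_vesztergombi_pos_eq_card_callan_first[of "n - p + 1" p r] assms
    by (simp add: vesztergombi_pos_conv_inv callan_first_def)
  finally have "card ?T = card ?C" .
  moreover have "finite ?T"
    by (rule finite_subset[OF _ finite_permutations[of "{1..n}"]]) (auto simp: toppleable_perms_def)
  ultimately show "\<exists>g. bij_betw g ?T ?C"
    using finite_same_card_bij finite_callan_first[of "n - p + 1" p r] by (simp add: callan_first_def)
qed

end
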